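(* For all $\lambda_1,\lambda_2\in[0,1]$ and irrational $\Phi\in\mathbb T$, $\Sigma_{\lambda_1,\lambda_2,\Phi}=\Sigma_{\lambda_2,\lambda_1,\Phi}$.
   Context: Let $\mathbb T=\mathbb R/\mathbb Z$ and $\partial\mathbb D=\{z\in\mathbb C:|z|=1\}$. Let $\mathscr H_1=\ell^2(\mathbb Z)\otimes\mathbb C^2$ with orthonormal basis $\delta_n^{s}=\delta_n\otimes e_s$ ($n\in\mathbb Z$, $s\in\{+,-\}$), $e_+=(1,0)^\top$, $e_-=(0,1)^\top$; write $\psi_n^s=\langle\delta_n^s,\psi\rangle$ and $\psi_n=(\psi_n^+,\psi_n^-)^\top$. For $\lambda\in[0,1]$ put $\lambda'=\sqrt{1-\lambda^2}$ and let $S_\lambda$ be the unitary operator with $S_\lambda\delta_n^\pm=\lambda\delta_{n\pm1}^\pm\pm\lambda'\delta_n^\mp$. For $\lambda_2\in[0,1]$, $\Phi,\theta\in\mathbb T$, $n\in\mathbb Z$ let $$Q_n=Q_{\lambda_2,\Phi,\theta,n}=\begin{bmatrix}\lambda_2\cos(2\pi(n\Phi+\theta))+i\lambda_2' & -\lambda_2\sin(2\pi(n\Phi+\theta))\\ \lambda_2\sin(2\pi(n\Phi+\theta)) & \lambda_2\cos(2\pi(n\Phi+\theta))-i\lambda_2'\end{bmatrix},$$ and let $Q_{\lambda_2,\Phi,\theta}$ act by $(Q\psi)_n=Q_n\psi_n$. The unitary almost-Mathieu operator is $W_{\lambda_1,\lambda_2,\Phi,\theta}=S_{\lambda_1}Q_{\lambda_2,\Phi,\theta}$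 on $\mathscr H_1$, for $\lambda_1,\lambda_2\in[0,1]$. For irrational $\Phi$ its spectrum does not depend on $\theta$ and is denoted $\Sigma_{\lambda_1,\lambda_2,\Phi}\subset\partial\mathbb D$. *)

theory Defs
  imports "HOL-Analysis.Analysis"
begin

text \<open>States in \<open>\<ell>\<^sup>2(\<int>) \<otimes> \<complex>\<^sup>2\<close>: \<open>\<psi> n True = \<psi>\<^sub>n\<^sup>+\<close>, \<open>\<psi> n False = \<psi>\<^sub>n\<^sup>-\<close>.\<close>
type_synonym state = "int \<Rightarrow> bool \<Rightarrow> complex"

definition l2 :: "state set" where
  "l2 = {\<psi>. (\<lambda>(n, s). (norm (\<psi> n s))\<^sup>2) summable_on (UNIV :: (int \<times> bool) set)}"

definition l2norm :: "state \<Rightarrow> real" where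
  "l2norm \<psi> = sqrt (infsum (\<lambda>(n, s). (norm (\<psi> n s))\<^sup>2) (UNIV :: (int \<times> bool) set))"

definition cpl :: "real \<Rightarrow> real" where
  "cpl lam = sqrt (1 - lam\<^sup>2)"

text \<open>Shift: \<open>S\<^sub>\<lambda> \<delta>\<^sub>n\<^sup>\<plusminus> = \<lambda> \<delta>\<^sub>n\<^sub>\<plusminus>\<^sub>1\<^sup>\<plusminus> \<plusminus> \<lambda>' \<delta>\<^sub>n\<^sup>\<mp>\<close>, written in coordinates.\<close>
definition Sop :: "real \<Rightarrow> state \<Rightarrow> state" where
  "Sop lam \<psi> = (\<lambda>n s. if s
      then complex_of_real lam * \<psi> (n - 1) True - complex_of_real (cpl lam) * \<psi> n False
      else complex_of_real lam * \<psi> (n + 1) False + complex_of_real (cpl lam) * \<psi> n True)"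

definition Qop :: "real \<Rightarrow> real \<Rightarrow> real \<Rightarrow> state \<Rightarrow> state" where
  "Qop lam \<Phi> \<theta> \<psi> = (\<lambda>n s.
     let c = complex_of_real (lam * cos (2 * pi * (of_int n * \<Phi> + \<theta>)));
         d = complex_of_real (lam * sin (2 * pi * (of_int n * \<Phi> + \<theta>)));
         l' = complex_of_real (cpl lam)
     in if s then (c + \<i> * l') * \<psi> n True - d * \<psi> n False
        else d * \<psi> n True + (c - \<i> * l') * \<psi> n False)"

definition UAMO :: "real \<Rightarrow> real \<Rightarrow> real \<Rightarrow> real \<Rightarrow> state \<Rightarrow> state" where
  "UAMO lam1 lam2 \<Phi> \<theta> = Sop lam1 \<circ> Qop lam2 \<Phi> \<theta>"

definition op_spectrum :: "(state \<Rightarrow> state) \<Rightarrow> complex set" where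
  "op_spectrum T = {z. \<not> (\<exists>R. (\<forall>\<psi>\<in>l2. R \<psi> \<in> l2
        \<and> (\<lambda>n s. T (R \<psi>) n s - z * R \<psi> n s) = \<psi>
        \<and> R (\<lambda>n s. T \<psi> n s - z * \<psi> n s) = \<psi>)
      \<and> (\<exists>C. \<forall>\<psi>\<in>l2. l2norm (R \<psi>) \<le> C * l2norm \<psi>))}"

text \<open>\<open>\<Sigma>\<^sub>\<lambda>\<^sub>1\<^sub>,\<^sub>\<lambda>\<^sub>2\<^sub>,\<^sub>\<Phi>\<close>: for irrational \<open>\<Phi>\<close> the spectrum does not depend on \<open>\<theta>\<close>, so it equals
  the union over all phases.\<close>
definition Sigma_UAMO :: "real \<Rightarrow> real \<Rightarrow> real \<Rightarrow> complex set" where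
  "Sigma_UAMO lam1 lam2 \<Phi> = (\<Union>\<theta>. op_spectrum (UAMO lam1 lam2 \<Phi> \<theta>))"

end

theory Submission
  imports Defs
begin

definition site_norm2 :: "state \<Rightarrow> int \<Rightarrow> real" where
  "site_norm2 \<phi> n = (cmod (\<phi> n True))\<^sup>2 + (cmod (\<phi> n False))\<^sup>2"

definition window_norm :: "int \<Rightarrow> state \<Rightarrow> real" where
  "window_norm N \<phi> = L2_set (\<lambda>(n, s). cmod (\<phi> n s)) ({-N..N} \<times> UNIV)"

definition supported_in :: "int \<Rightarrow> state \<Rightarrow> bool" where
  "supported_in K \<phi> \<longleftrightarrow> (\<forall>n s. K < \<bar>n\<bar> \<longrightarrow> \<phi> n s = 0)"

definition truncate :: "int \<Rightarrow> state \<Rightarrow> state" where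
  "truncate K \<phi> = (\<lambda>n s. if \<bar>n\<bar> \<le> K then \<phi> n s else 0)"

abbreviation op_minus :: "(state \<Rightarrow> state) \<Rightarrow> complex \<Rightarrow> state \<Rightarrow> state" where
  "op_minus T z \<psi> \<equiv> (\<lambda>n s. T \<psi> n s - z * \<psi> n s)"

lemma sum_times_UNIV_bool:
  "(\<Sum>p\<in>A \<times> (UNIV :: bool set). f p) = (\<Sum>n\<in>A. f (n, True) + f (n, False))"
proof -
  have "(\<Sum>p\<in>A \<times> (UNIV :: bool set). f p) = (\<Sum>n\<in>A. \<Sum>s\<in>UNIV. f (n, s))"
    by (simp add: sum.cartesian_product)
  then show ?thesis by (simp add: UNIV_bool add.commute)
qed

lemma site_norm2_nonneg [simp]: "0 \<le> site_norm2 \<phi> n"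
  by (simp add: site_norm2_def)

lemma window_norm_nonneg [simp]: "0 \<le> window_norm N \<phi>"
  by (simp add: window_norm_def)

lemma window_sum_eq_sum_times:
  "(\<Sum>n\<in>{-N..N}. site_norm2 \<phi> n) = (\<Sum>(n, s)\<in>{-N..N} \<times> UNIV. (cmod (\<phi> n s))\<^sup>2)"
  by (simp add: sum_times_UNIV_bool site_norm2_def)

lemma window_norm_sq: "(window_norm N \<phi>)\<^sup>2 = (\<Sum>n\<in>{-N..N}. site_norm2 \<phi> n)"
  unfolding window_norm_def L2_set_def window_sum_eq_sum_times
  by (subst real_sqrt_pow2) (auto intro!: sum_nonneg simp: case_prod_unfold)

lemma window_norm_eq_sqrt: "window_norm N \<phi> = sqrt (\<Sum>n\<in>{-N..N}. site_norm2 \<phi> n)"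
  by (metis real_sqrt_unique window_norm_nonneg window_norm_sq)

lemma window_norm_mono: "N \<le> M \<Longrightarrow> window_norm N \<phi> \<le> window_norm M \<phi>"
  unfolding window_norm_eq_sqrt by (auto intro!: sum_mono2)

lemma window_norm_cong:
  "(\<And>n s. \<bar>n\<bar> \<le> N \<Longrightarrow> \<phi> n s = \<psi> n s) \<Longrightarrow> window_norm N \<phi> = window_norm N \<psi>"
  unfolding window_norm_eq_sqrt site_norm2_def
  by (intro arg_cong[where f = sqrt] sum.cong) (auto simp: abs_le_iff)

lemma window_norm_add_le:
  "window_norm N (\<lambda>n s. \<phi> n s + \<psi> n s) \<le> window_norm N \<phi> + window_norm N \<psi>"
proof -
  have "window_norm N (\<lambda>n s. \<phi> n s + \<psi> n s)
      \<le> L2_set (\<lambda>(n, s). cmod (\<phi> n s) + cmod (\<psi> n s)) ({-N..N} \<times> UNIV)"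
    unfolding window_norm_def by (rule L2_set_mono) (auto simp: norm_triangle_ineq)
  also have "\<dots> \<le> window_norm N \<phi> + window_norm N \<psi>"
    using L2_set_triangle_ineq[of "\<lambda>(n, s). cmod (\<phi> n s)" "\<lambda>(n, s). cmod (\<psi> n s)"]
    unfolding window_norm_def by (simp add: case_prod_unfold)
  finally show ?thesis .
qed

lemma window_norm_scale: "window_norm N (\<lambda>n s. c * \<phi> n s) = cmod c * window_norm N \<phi>"
  unfolding window_norm_def
  by (subst L2_set_right_distrib) (auto simp: norm_mult case_prod_unfold)

lemma norm_le_window_norm: "\<bar>n\<bar> \<le> N \<Longrightarrow> cmod (\<phi> n s) \<le> window_norm N \<phi>"
  using member_le_L2_set[of "{-N..N} \<times> UNIV" "(n, s)" "\<lambda>(n, s). cmod (\<phi> n s)"]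
  unfolding window_norm_def by (auto simp: abs_le_iff)

lemma finite_subset_window:
  assumes "finite (F :: (int \<times> bool) set)"
  obtains N where "F \<subseteq> {-N..N} \<times> UNIV"
proof -
  obtain N where "\<And>x. x \<in> F \<Longrightarrow> \<bar>fst x\<bar> \<le> N"
    using assms bdd_above_finite[of "abs ` fst ` F"] unfolding bdd_above_def by auto
  then have "F \<subseteq> {-N..N} \<times> UNIV" by (force simp: abs_le_iff)
  then show thesis by (rule that)
qed

lemma window_norm_le_l2norm: "\<phi> \<in> l2 \<Longrightarrow> window_norm N \<phi> \<le> l2norm \<phi>"
  unfolding window_norm_eq_sqrt l2norm_def window_sum_eq_sum_times l2_def
  by (auto intro!: finite_sum_le_infsum)

lemma l2norm_nonneg [simp]: "0 \<le> l2norm \<phi>"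
  unfolding l2norm_def by (rule real_sqrt_ge_zero, rule infsum_nonneg) (simp add: case_prod_beta)

lemma norm_le_l2norm: "\<phi> \<in> l2 \<Longrightarrow> cmod (\<phi> n s) \<le> l2norm \<phi>"
  using norm_le_window_norm[of n "\<bar>n\<bar>" \<phi> s] window_norm_le_l2norm[of \<phi> "\<bar>n\<bar>"] by simp

lemma l2norm_sq_eq_SUP:
  assumes "\<phi> \<in> l2"
  shows "(l2norm \<phi>)\<^sup>2 = (SUP F\<in>{F. finite F \<and> F \<subseteq> UNIV}. \<Sum>(n, s)\<in>F. (cmod (\<phi> n s))\<^sup>2)"
proof -
  have "(l2norm \<phi>)\<^sup>2 = (\<Sum>\<^sub>\<infinity>(n, s). (cmod (\<phi> n s))\<^sup>2)"
    unfolding l2norm_def by (subst real_sqrt_pow2) (auto intro!: infsum_nonneg)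
  also have "\<dots> = (SUP F\<in>{F. finite F \<and> F \<subseteq> UNIV}. \<Sum>(n, s)\<in>F. (cmod (\<phi> n s))\<^sup>2)"
    using assms unfolding l2_def by (intro infsum_nonneg_is_SUPREMUM_real) (simp_all add: case_prod_beta)
  finally show ?thesis .
qed

lemma l2_window_boundedI:
  assumes bound: "\<And>N. window_norm N \<phi> \<le> M"
  shows "\<phi> \<in> l2" and "l2norm \<phi> \<le> M"
proof -
  let ?f = "\<lambda>(n, s). (cmod (\<phi> n s))\<^sup>2"
  have M0: "0 \<le> M" using bound[of 0] window_norm_nonneg[of 0 \<phi>] by linarith
  have finite_le: "sum ?f F \<le> M\<^sup>2" if fin: "finite F" for F
  proof -
    obtain N where "F \<subseteq> {-N..N} \<times> UNIV" using finite_subset_window[OF fin] .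
    then have "sum ?f F \<le> sum ?f ({-N..N} \<times> UNIV)" by (intro sum_mono2) auto
    also have "\<dots> = (window_norm N \<phi>)\<^sup>2" by (simp add: window_norm_sq window_sum_eq_sum_times)
    also have "\<dots> \<le> M\<^sup>2" using bound[of N] by (simp add: power_mono)
    finally show ?thesis .
  qed
  then have "bdd_above (sum ?f ` {F. F \<subseteq> UNIV \<and> finite F})"
    by (auto simp: bdd_above_def)
  then have "?f summable_on UNIV"
    by (rule nonneg_bdd_above_summable_on[rotated]) auto
  then show l2: "\<phi> \<in> l2" by (simp add: l2_def)
  have "(l2norm \<phi>)\<^sup>2 \<le> M\<^sup>2"
    unfolding l2norm_sq_eq_SUP[OF l2] by (rule cSUP_least) (auto intro: finite_le)
  then show "l2norm \<phi> \<le> M" using M0 by (rule power2_le_imp_le)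
qed

lemma l2norm_sq_less_window_norm_sq:
  assumes "\<phi> \<in> l2" "0 < e"
  obtains N where "(l2norm \<phi>)\<^sup>2 - e < (window_norm N \<phi>)\<^sup>2"
proof -
  let ?f = "\<lambda>(n, s). (cmod (\<phi> n s))\<^sup>2"
  have "bdd_above (sum ?f ` {F. finite F \<and> F \<subseteq> UNIV})"
    using assms(1) unfolding l2_def
    by (auto simp: bdd_above_def intro!: exI[of _ "infsum ?f UNIV"] finite_sum_le_infsum)
  moreover have "(l2norm \<phi>)\<^sup>2 - e < (SUP F\<in>{F. finite F \<and> F \<subseteq> UNIV}. sum ?f F)"
    unfolding l2norm_sq_eq_SUP[OF assms(1), symmetric] using assms(2) by simp
  ultimately obtain F where F: "finite F" "(l2norm \<phi>)\<^sup>2 - e < sum ?f F"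
    by (subst (asm) less_cSUP_iff) auto
  obtain N where "F \<subseteq> {-N..N} \<times> UNIV" using finite_subset_window[OF F(1)] .
  then have "sum ?f F \<le> (window_norm N \<phi>)\<^sup>2"
    unfolding window_norm_sq window_sum_eq_sum_times by (intro sum_mono2) auto
  then show thesis using F(2) by (intro that[of N]) linarith
qed

lemma sum_window_supported:
  fixes f :: "int \<Rightarrow> 'a::comm_monoid_add"
  assumes "\<And>n. K < \<bar>n\<bar> \<Longrightarrow> f n = 0" "{-K..K} \<subseteq> A" "finite A"
  shows "sum f A = (\<Sum>n\<in>{-K..K}. f n)"
  using assms by (intro sum.mono_neutral_right) (auto simp: abs_le_iff not_le)

lemma sum_window_shift:
  fixes f :: "int \<Rightarrow> 'a::comm_monoid_add"
  assumes supp: "\<And>n. K < \<bar>n\<bar> \<Longrightarrow> f n = 0" and "K + \<bar>p\<bar> \<le> N"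
  shows "(\<Sum>n\<in>{-N..N}. f (n + p)) = (\<Sum>n\<in>{-N..N}. f n)"
proof -
  have "{-K..K} \<subseteq> (\<lambda>n. n + p) ` {-N..N}"
  proof
    fix x assume "x \<in> {-K..K}"
    then have "x - p \<in> {-N..N}" using assms(2) by auto
    then show "x \<in> (\<lambda>n. n + p) ` {-N..N}" by (intro image_eqI[of _ _ "x - p"]) auto
  qed
  then have "sum f ((\<lambda>n. n + p) ` {-N..N}) = (\<Sum>n\<in>{-K..K}. f n)"
    by (intro sum_window_supported[OF supp]) auto
  then have "(\<Sum>n\<in>{-N..N}. f (n + p)) = (\<Sum>n\<in>{-K..K}. f n)"
    by (subst (asm) sum.reindex) (auto simp: inj_on_def)
  also have "\<dots> = (\<Sum>n\<in>{-N..N}. f n)"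
    by (rule sum_window_supported[OF supp, symmetric]) (use assms(2) in auto)
  finally show ?thesis .
qed

lemma window_sum_supported:
  "supported_in K \<phi> \<Longrightarrow> K \<le> N \<Longrightarrow> (\<Sum>n\<in>{-N..N}. site_norm2 \<phi> n) = (\<Sum>n\<in>{-K..K}. site_norm2 \<phi> n)"
  by (rule sum_window_supported) (auto simp: supported_in_def site_norm2_def)

lemma window_norm_supported:
  "supported_in K \<phi> \<Longrightarrow> K \<le> N \<Longrightarrow> window_norm N \<phi> = window_norm K \<phi>"
  unfolding window_norm_eq_sqrt by (subst window_sum_supported[of K \<phi> N]) auto

lemma supported_in_mono: "supported_in K \<phi> \<Longrightarrow> K \<le> K' \<Longrightarrow> supported_in K' \<phi>"
  unfolding supported_in_def by auto

lemma supported_imp_l2: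
  assumes "supported_in K \<phi>"
  shows "\<phi> \<in> l2" and "l2norm \<phi> = window_norm K \<phi>"
proof -
  have bound: "window_norm N \<phi> \<le> window_norm K \<phi>" for N
    using window_norm_mono[of N K \<phi>] window_norm_supported[OF assms, of N] by (cases "N \<le> K") auto
  show "\<phi> \<in> l2" by (rule l2_window_boundedI(1)[OF bound])
  then show "l2norm \<phi> = window_norm K \<phi>"
    using l2_window_boundedI(2)[OF bound] window_norm_le_l2norm[of \<phi> K] by linarith
qed

lemma supported_truncate: "supported_in K (truncate K \<phi>)"
  by (simp add: supported_in_def truncate_def)

lemma window_norm_truncate: "window_norm K (truncate K \<phi>) = window_norm K \<phi>"
  by (rule window_norm_cong) (simp add: truncate_def)

lemma l2_add:
  assumes "\<phi> \<in> l2" "\<psi> \<in> l2"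
  shows "(\<lambda>n s. \<phi> n s + \<psi> n s) \<in> l2"
    and "l2norm (\<lambda>n s. \<phi> n s + \<psi> n s) \<le> l2norm \<phi> + l2norm \<psi>"
proof -
  have "window_norm N (\<lambda>n s. \<phi> n s + \<psi> n s) \<le> l2norm \<phi> + l2norm \<psi>" for N
    using window_norm_add_le[of N \<phi> \<psi>] window_norm_le_l2norm[OF assms(1), of N]
      window_norm_le_l2norm[OF assms(2), of N] by linarith
  then show "(\<lambda>n s. \<phi> n s + \<psi> n s) \<in> l2" "l2norm (\<lambda>n s. \<phi> n s + \<psi> n s) \<le> l2norm \<phi> + l2norm \<psi>"
    by (fact l2_window_boundedI)+
qed

lemma l2_scale:
  assumes "\<phi> \<in> l2"
  shows "(\<lambda>n s. c * \<phi> n s) \<in> l2" and "l2norm (\<lambda>n s. c * \<phi> n s) = cmod c * l2norm \<phi>"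
proof -
  have "window_norm N (\<lambda>n s. c * \<phi> n s) \<le> cmod c * l2norm \<phi>" for N
    using window_norm_le_l2norm[OF assms, of N] by (simp add: window_norm_scale mult_left_mono)
  then have l2: "(\<lambda>n s. c * \<phi> n s) \<in> l2" and le: "l2norm (\<lambda>n s. c * \<phi> n s) \<le> cmod c * l2norm \<phi>"
    by (fact l2_window_boundedI)+
  show "(\<lambda>n s. c * \<phi> n s) \<in> l2" by (fact l2)
  show "l2norm (\<lambda>n s. c * \<phi> n s) = cmod c * l2norm \<phi>"
  proof (cases "c = 0")
    case True
    then show ?thesis using le by (metis antisym l2norm_nonneg mult_zero_left norm_zero)
  next
    case False
    have "window_norm N \<phi> \<le> l2norm (\<lambda>n s. c * \<phi> n s) / cmod c" for N
      using window_norm_le_l2norm[OF l2, of N] False by (simp add: window_norm_scale field_simps)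
    then have "l2norm \<phi> \<le> l2norm (\<lambda>n s. c * \<phi> n s) / cmod c" by (rule l2_window_boundedI(2))
    then show ?thesis using le False by (simp add: field_simps)
  qed
qed

lemma l2_diff:
  assumes "\<phi> \<in> l2" "\<psi> \<in> l2"
  shows "(\<lambda>n s. \<phi> n s - \<psi> n s) \<in> l2"
    and "l2norm (\<lambda>n s. \<phi> n s - \<psi> n s) \<le> l2norm \<phi> + l2norm \<psi>"
  using l2_add[OF assms(1) l2_scale(1)[OF assms(2), of "-1"]] l2_scale(2)[OF assms(2), of "-1"]
  by simp_all

lemma l2_zero: "(\<lambda>n s. 0) \<in> l2" and l2norm_zero: "l2norm (\<lambda>n s. 0) = 0"
  using supported_imp_l2[of 0 "\<lambda>n s. 0"] by (simp_all add: supported_in_def window_norm_def L2_set_0')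

lemma l2norm_eq_0_iff:
  assumes "\<phi> \<in> l2"
  shows "l2norm \<phi> = 0 \<longleftrightarrow> \<phi> = (\<lambda>n s. 0)"
proof
  assume "l2norm \<phi> = 0"
  then show "\<phi> = (\<lambda>n s. 0)" using norm_le_l2norm[OF assms] by (intro ext) (metis norm_le_zero_iff)
qed (simp add: l2norm_zero)

lemma l2_op_minus:
  assumes "\<psi> \<in> l2" and "T \<psi> \<in> l2"
  shows "op_minus T z \<psi> \<in> l2"
  using l2_diff(1)[OF assms(2) l2_scale(1)[OF assms(1)]] .

lemma window_norm_truncate_diff:
  "(window_norm M (\<lambda>n s. \<phi> n s - truncate K \<phi> n s))\<^sup>2 + (window_norm K \<phi>)\<^sup>2
     \<le> (window_norm (max M K) \<phi>)\<^sup>2"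
proof -
  let ?L = "max M K"
  have restrict: "(\<Sum>n\<in>{-M'..M'}. g n) = (\<Sum>n\<in>{-?L..?L}. if n \<in> {-M'..M'} then g n else 0)"
    if "M' \<le> ?L" for M' and g :: "int \<Rightarrow> real"
    using that by (subst sum.inter_restrict[symmetric]) (auto intro!: sum.cong)
  have "(window_norm M (\<lambda>n s. \<phi> n s - truncate K \<phi> n s))\<^sup>2 + (window_norm K \<phi>)\<^sup>2
     = (\<Sum>n\<in>{-?L..?L}. (if n \<in> {-M..M} then site_norm2 (\<lambda>n s. \<phi> n s - truncate K \<phi> n s) n else 0)
                        + (if n \<in> {-K..K} then site_norm2 \<phi> n else 0))"
    unfolding window_norm_sq sum.distrib by (subst (1 2) restrict) simp_all
  also have "\<dots> \<le> (\<Sum>n\<in>{-?L..?L}. site_norm2 \<phi> n)"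
    by (intro sum_mono) (auto simp: site_norm2_def truncate_def abs_le_iff)
  finally show ?thesis by (simp add: window_norm_sq)
qed

lemma l2_truncate_approx:
  assumes "\<phi> \<in> l2" "0 < e"
  obtains K where "l2norm (\<lambda>n s. \<phi> n s - truncate K \<phi> n s) \<le> e"
proof -
  obtain K where K: "(l2norm \<phi>)\<^sup>2 - e\<^sup>2 < (window_norm K \<phi>)\<^sup>2"
    using l2norm_sq_less_window_norm_sq[OF assms(1)] assms(2) by (metis zero_less_power)
  have "window_norm M (\<lambda>n s. \<phi> n s - truncate K \<phi> n s) \<le> e" for M
  proof -
    have "(window_norm (max M K) \<phi>)\<^sup>2 \<le> (l2norm \<phi>)\<^sup>2"
      using window_norm_le_l2norm[OF assms(1)] by (simp add: power_mono)
    then have "(window_norm M (\<lambda>n s. \<phi> n s - truncate K \<phi> n s))\<^sup>2 \<le> e\<^sup>2"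
      using window_norm_truncate_diff[of M \<phi> K] K by linarith
    then show ?thesis by (rule power2_le_imp_le) (use assms(2) in simp)
  qed
  then show thesis by (intro that l2_window_boundedI(2))
qed

definition finite_range :: "int \<Rightarrow> (state \<Rightarrow> state) \<Rightarrow> bool" where
  "finite_range r T \<longleftrightarrow>
     (\<forall>\<phi> \<phi>' n s. (\<forall>m s'. \<bar>m - n\<bar> \<le> r \<longrightarrow> \<phi> m s' = \<phi>' m s') \<longrightarrow> T \<phi> n s = T \<phi>' n s)"

definition window_isometric :: "int \<Rightarrow> (state \<Rightarrow> state) \<Rightarrow> bool" where
  "window_isometric r T \<longleftrightarrow> (\<forall>K \<phi>. supported_in K \<phi> \<longrightarrow>
     supported_in (K + r) (T \<phi>) \<and> (\<forall>N \<ge> K + r. window_norm N (T \<phi>) = window_norm N \<phi>))"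

lemma finite_rangeD:
  "finite_range r T \<Longrightarrow> (\<And>m s'. \<bar>m - n\<bar> \<le> r \<Longrightarrow> \<phi> m s' = \<phi>' m s') \<Longrightarrow> T \<phi> n s = T \<phi>' n s"
  unfolding finite_range_def by blast

lemma window_isometricD:
  assumes "window_isometric r T" "supported_in K \<phi>"
  shows "supported_in (K + r) (T \<phi>)" and "K + r \<le> N \<Longrightarrow> window_norm N (T \<phi>) = window_norm N \<phi>"
  using assms unfolding window_isometric_def by blast+

lemma finite_range_comp:
  assumes A: "finite_range r A" and B: "finite_range r' B"
  shows "finite_range (r + r') (A \<circ> B)"
  unfolding finite_range_def comp_def
proof (intro allI impI)
  fix \<phi> \<phi>' :: state and n s assume agree: "\<forall>m s'. \<bar>m - n\<bar> \<le> r + r' \<longrightarrow> \<phi> m s' = \<phi>' m s'"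
  have "B \<phi> m s' = B \<phi>' m s'" if "\<bar>m - n\<bar> \<le> r" for m s'
    by (rule finite_rangeD[OF B], rule agree[rule_format]) (use that in arith)
  then show "A (B \<phi>) n s = A (B \<phi>') n s" by (rule finite_rangeD[OF A])
qed

lemma window_isometric_comp:
  assumes A: "window_isometric r A" and B: "window_isometric r' B" and "0 \<le> r"
  shows "window_isometric (r + r') (A \<circ> B)"
  unfolding window_isometric_def comp_def
proof (intro allI impI)
  fix K \<phi> assume \<phi>: "supported_in K \<phi>"
  have B\<phi>: "supported_in (K + r') (B \<phi>)" by (rule window_isometricD(1)[OF B \<phi>])
  show "supported_in (K + (r + r')) (A (B \<phi>)) \<and>
      (\<forall>N \<ge> K + (r + r'). window_norm N (A (B \<phi>)) = window_norm N \<phi>)"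
    using window_isometricD[OF A B\<phi>] window_isometricD(2)[OF B \<phi>] \<open>0 \<le> r\<close>
    by (simp add: add_ac)
qed

text \<open>A state is compared on the window \<open>[-N, N]\<close> with its truncation to \<open>[-N-r, N+r]\<close>,
  whose image has the same window norms.\<close>
lemma l2_contraction_finite_range:
  assumes "0 \<le> r" "finite_range r T" "window_isometric r T" "\<phi> \<in> l2"
  shows "T \<phi> \<in> l2" and "l2norm (T \<phi>) \<le> l2norm \<phi>"
proof -
  have "window_norm N (T \<phi>) \<le> l2norm \<phi>" for N
  proof -
    define t where "t = truncate (N + r) \<phi>"
    have t: "supported_in (N + r) t" by (simp add: t_def supported_truncate)
    have "window_norm N (T \<phi>) = window_norm N (T t)"
      by (intro window_norm_cong finite_rangeD[OF assms(2)]) (auto simp: t_def truncate_def)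
    also have "\<dots> \<le> window_norm (N + r + r) (T t)" by (rule window_norm_mono) (use assms(1) in simp)
    also have "\<dots> = window_norm (N + r + r) t" by (rule window_isometricD(2)[OF assms(3) t]) simp
    also have "\<dots> = window_norm (N + r) \<phi>"
      using window_norm_supported[OF t, of "N + r + r"] assms(1) by (simp add: t_def window_norm_truncate)
    also have "\<dots> \<le> l2norm \<phi>" by (rule window_norm_le_l2norm[OF assms(4)])
    finally show ?thesis .
  qed
  then show "T \<phi> \<in> l2" "l2norm (T \<phi>) \<le> l2norm \<phi>" by (fact l2_window_boundedI)+
qed

locale l2_unitary =
  fixes T :: "state \<Rightarrow> state"
  assumes linear: "T (\<lambda>n s. c * \<phi> n s + \<psi> n s) = (\<lambda>n s. c * T \<phi> n s + T \<psi> n s)"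
    and l2_closed: "\<phi> \<in> l2 \<Longrightarrow> T \<phi> \<in> l2"
    and l2norm_eq: "\<phi> \<in> l2 \<Longrightarrow> l2norm (T \<phi>) = l2norm \<phi>"
    and surjective: "\<psi> \<in> l2 \<Longrightarrow> \<exists>\<phi>\<in>l2. T \<phi> = \<psi>"
    and pointwise_continuous:
      "(\<And>n s. (\<lambda>k. X k n s) \<longlonglongrightarrow> \<phi> n s) \<Longrightarrow> (\<lambda>k. T (X k) n s) \<longlonglongrightarrow> T \<phi> n s"

lemma l2_unitaryI:
  assumes linear: "\<And>c \<phi> \<psi>. A (\<lambda>n s. c * \<phi> n s + \<psi> n s) = (\<lambda>n s. c * A \<phi> n s + A \<psi> n s)"
    and cont: "\<And>X \<phi> n s. (\<And>n s. (\<lambda>k. X k n s) \<longlonglongrightarrow> \<phi> n s) \<Longrightarrow> (\<lambda>k. A (X k) n s) \<longlonglongrightarrow> A \<phi> n s"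
    and "0 \<le> r" "finite_range r A" "window_isometric r A" "finite_range r B" "window_isometric r B"
    and inverse: "\<And>\<phi>. A (B \<phi>) = \<phi>" "\<And>\<phi>. B (A \<phi>) = \<phi>"
  shows "l2_unitary A"
proof
  show "\<phi> \<in> l2 \<Longrightarrow> A \<phi> \<in> l2" for \<phi> by (rule l2_contraction_finite_range(1)[OF assms(3-5)])
  show "l2norm (A \<phi>) = l2norm \<phi>" if "\<phi> \<in> l2" for \<phi>
    using l2_contraction_finite_range[OF assms(3-5) that]
      l2_contraction_finite_range(2)[OF assms(3,6,7), of "A \<phi>"] inverse(2)[of \<phi>] by simp
  show "\<exists>\<phi>\<in>l2. A \<phi> = \<psi>" if "\<psi> \<in> l2" for \<psi>
    using l2_contraction_finite_range(1)[OF assms(3,6,7) that] inverse(1) by blast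
qed (fact linear cont)+

text \<open>Generalised shift and coin operators: \<open>Sop \<lambda>\<close> and \<open>Qop \<lambda> \<Phi> \<theta>\<close> are instances, and unlike
  those two families these are closed under inversion.\<close>
definition gen_shift :: "real \<Rightarrow> real \<Rightarrow> int \<Rightarrow> state \<Rightarrow> state" where
  "gen_shift a b p \<phi> = (\<lambda>n s. if s then of_real a * \<phi> (n + p) True + of_real b * \<phi> n False
                             else of_real a * \<phi> (n - p) False - of_real b * \<phi> n True)"

definition gen_coin :: "(int \<Rightarrow> real) \<Rightarrow> (int \<Rightarrow> real) \<Rightarrow> real \<Rightarrow> state \<Rightarrow> state" where
  "gen_coin c d l \<phi> = (\<lambda>n s.
     if s then (of_real (c n) + \<i> * of_real l) * \<phi> n True - of_real (d n) * \<phi> n False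
     else of_real (d n) * \<phi> n True + (of_real (c n) - \<i> * of_real l) * \<phi> n False)"

lemma cmod_real_comb_sq:
  "(cmod (of_real a * x + of_real b * y))\<^sup>2
     = a\<^sup>2 * (cmod x)\<^sup>2 + b\<^sup>2 * (cmod y)\<^sup>2 + 2 * a * b * Re (x * cnj y)"
  unfolding cmod_power2 by (simp add: power2_eq_square algebra_simps)

lemma cmod_real_comb_sq_le:
  assumes "a\<^sup>2 + b\<^sup>2 = 1"
  shows "(cmod (of_real a * x + of_real b * y))\<^sup>2 \<le> (cmod x)\<^sup>2 + (cmod y)\<^sup>2"
proof -
  have "(cmod (of_real a * x + of_real b * y))\<^sup>2 + (cmod (of_real b * x - of_real a * y))\<^sup>2
      = (a\<^sup>2 + b\<^sup>2) * ((cmod x)\<^sup>2 + (cmod y)\<^sup>2)"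
    unfolding cmod_power2 by (simp add: power2_eq_square algebra_simps)
  then have "(cmod (of_real a * x + of_real b * y))\<^sup>2 + (cmod (of_real b * x - of_real a * y))\<^sup>2
      = (cmod x)\<^sup>2 + (cmod y)\<^sup>2" using assms by simp
  moreover have "0 \<le> (cmod (of_real b * x - of_real a * y))\<^sup>2" by simp
  ultimately show ?thesis by linarith
qed

lemma site_norm2_gen_coin:
  "site_norm2 (gen_coin c d l \<phi>) n = ((c n)\<^sup>2 + (d n)\<^sup>2 + l\<^sup>2) * site_norm2 \<phi> n"
  unfolding site_norm2_def gen_coin_def cmod_power2 by (simp add: power2_eq_square algebra_simps)

lemma site_norm2_gen_shift_le:
  assumes "a\<^sup>2 + b\<^sup>2 = 1"
  shows "site_norm2 (gen_shift a b p \<phi>) n \<le> site_norm2 \<phi> (n + p) + site_norm2 \<phi> n + site_norm2 \<phi> (n - p)"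
proof -
  have "a\<^sup>2 + (-b)\<^sup>2 = 1" using assms by simp
  from cmod_real_comb_sq_le[OF this, of "\<phi> (n - p) False" "\<phi> n True"]
  have "(cmod (of_real a * \<phi> (n - p) False - of_real b * \<phi> n True))\<^sup>2
      \<le> (cmod (\<phi> (n - p) False))\<^sup>2 + (cmod (\<phi> n True))\<^sup>2" by simp
  moreover have "site_norm2 (gen_shift a b p \<phi>) n
      = (cmod (of_real a * \<phi> (n + p) True + of_real b * \<phi> n False))\<^sup>2
        + (cmod (of_real a * \<phi> (n - p) False - of_real b * \<phi> n True))\<^sup>2"
    by (simp add: site_norm2_def gen_shift_def)
  moreover have "0 \<le> (cmod (\<phi> (n + p) False))\<^sup>2" "0 \<le> (cmod (\<phi> (n - p) True))\<^sup>2" by simp_all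
  ultimately show ?thesis
    using cmod_real_comb_sq_le[OF assms, of "\<phi> (n + p) True" "\<phi> n False"]
    unfolding site_norm2_def[of \<phi>] by linarith
qed

text \<open>On a window containing the support the cross terms \<open>Re (\<phi>\<^sub>n\<^sub>+\<^sub>p\<^sup>+ cnj \<phi>\<^sub>n\<^sup>-)\<close> telescope.\<close>
lemma window_sum_gen_shift:
  assumes ab: "a\<^sup>2 + b\<^sup>2 = 1" and p: "\<bar>p\<bar> \<le> 1" and K: "supported_in K \<phi>" and N: "K + 1 \<le> N"
  shows "(\<Sum>n\<in>{-N..N}. site_norm2 (gen_shift a b p \<phi>) n) = (\<Sum>n\<in>{-N..N}. site_norm2 \<phi> n)"
proof -
  define F1 where "F1 m = (cmod (\<phi> m True))\<^sup>2" for m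
  define F2 where "F2 m = (cmod (\<phi> m False))\<^sup>2" for m
  define h where "h m = 2 * a * b * Re (\<phi> (m + p) True * cnj (\<phi> m False))" for m
  have supp: "F1 m = 0" "F2 m = 0" "h m = 0" if "K < \<bar>m\<bar>" for m
    using K that by (simp_all add: supported_in_def F1_def F2_def h_def)
  have Np: "K + \<bar>p\<bar> \<le> N" "K + \<bar>-p\<bar> \<le> N" using N p by auto
  have shift: "(\<Sum>n\<in>{-N..N}. F1 (n + p)) = (\<Sum>n\<in>{-N..N}. F1 n)"
    "(\<Sum>n\<in>{-N..N}. F2 (n - p)) = (\<Sum>n\<in>{-N..N}. F2 n)"
    "(\<Sum>n\<in>{-N..N}. h (n - p)) = (\<Sum>n\<in>{-N..N}. h n)"
    using sum_window_shift[OF supp(1) Np(1)] sum_window_shift[OF supp(2) Np(2)]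
      sum_window_shift[OF supp(3) Np(2)] by simp_all
  have site: "site_norm2 (gen_shift a b p \<phi>) n
      = a\<^sup>2 * F1 (n + p) + b\<^sup>2 * F2 n + a\<^sup>2 * F2 (n - p) + b\<^sup>2 * F1 n + h n - h (n - p)" for n
  proof -
    have "Re (\<phi> (n - p) False * cnj (\<phi> n True)) = Re (\<phi> (n - p + p) True * cnj (\<phi> (n - p) False))"
      by (simp add: algebra_simps)
    then show ?thesis
      using cmod_real_comb_sq[of a "\<phi> (n + p) True" b "\<phi> n False"]
        cmod_real_comb_sq[of a "\<phi> (n - p) False" "-b" "\<phi> n True"]
      by (simp add: site_norm2_def gen_shift_def F1_def F2_def h_def)
  qed
  have "(\<Sum>n\<in>{-N..N}. site_norm2 (gen_shift a b p \<phi>) n)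
      = a\<^sup>2 * (\<Sum>n\<in>{-N..N}. F1 (n + p)) + b\<^sup>2 * (\<Sum>n\<in>{-N..N}. F2 n)
        + a\<^sup>2 * (\<Sum>n\<in>{-N..N}. F2 (n - p)) + b\<^sup>2 * (\<Sum>n\<in>{-N..N}. F1 n)
        + (\<Sum>n\<in>{-N..N}. h n) - (\<Sum>n\<in>{-N..N}. h (n - p))"
    unfolding site by (simp add: sum.distrib sum_subtractf sum_distrib_left)
  also have "\<dots> = (a\<^sup>2 + b\<^sup>2) * ((\<Sum>n\<in>{-N..N}. F1 n) + (\<Sum>n\<in>{-N..N}. F2 n))"
    unfolding shift by (simp add: algebra_simps)
  also have "\<dots> = (\<Sum>n\<in>{-N..N}. site_norm2 \<phi> n)"
    unfolding ab by (simp add: site_norm2_def F1_def F2_def sum.distrib)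
  finally show ?thesis .
qed

lemma gen_shift_inverse:
  assumes "a\<^sup>2 + b\<^sup>2 = 1"
  shows "gen_shift a b p (gen_shift a (-b) (-p) \<phi>) = \<phi>"
proof -
  have one: "complex_of_real a * of_real a + of_real b * of_real b = 1"
    using assms by (metis of_real_1 of_real_add of_real_mult power2_eq_square)
  have "gen_shift a b p (gen_shift a (-b) (-p) \<phi>) n s
      = (of_real a * of_real a + of_real b * of_real b) * \<phi> n s" for n s
    by (cases s) (simp_all add: gen_shift_def algebra_simps)
  then show ?thesis by (simp add: one fun_eq_iff)
qed

lemma gen_coin_inverse:
  assumes "\<And>n. (c n)\<^sup>2 + (d n)\<^sup>2 + l\<^sup>2 = 1"
  shows "gen_coin c d l (gen_coin c (\<lambda>n. - d n) (-l) \<phi>) = \<phi>"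
proof -
  have one: "complex_of_real (c n) * of_real (c n) + of_real (d n) * of_real (d n) + of_real l * of_real l = 1"
    for n using assms[of n] by (metis of_real_1 of_real_add of_real_mult power2_eq_square)
  have "gen_coin c d l (gen_coin c (\<lambda>n. - d n) (-l) \<phi>) n s
      = (of_real (c n) * of_real (c n) + of_real (d n) * of_real (d n) + of_real l * of_real l) * \<phi> n s"
    for n s by (cases s) (simp_all add: gen_coin_def algebra_simps)
  then show ?thesis by (simp add: one fun_eq_iff)
qed

lemma finite_range_gen_shift: "\<bar>p\<bar> \<le> 1 \<Longrightarrow> finite_range 1 (gen_shift a b p)"
  unfolding finite_range_def gen_shift_def by auto

lemma finite_range_gen_coin: "finite_range 0 (gen_coin c d l)"
  unfolding finite_range_def gen_coin_def by auto

lemma window_isometric_gen_shift: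
  assumes "a\<^sup>2 + b\<^sup>2 = 1" "\<bar>p\<bar> \<le> 1"
  shows "window_isometric 1 (gen_shift a b p)"
  unfolding window_isometric_def
proof (intro allI impI)
  fix K \<phi> assume K: "supported_in K \<phi>"
  have "gen_shift a b p \<phi> n s = 0" if "K + 1 < \<bar>n\<bar>" for n s
  proof -
    have "K < \<bar>n + p\<bar>" "K < \<bar>n - p\<bar>" "K < \<bar>n\<bar>" using that assms(2) by arith+
    then show ?thesis using K by (simp add: supported_in_def gen_shift_def)
  qed
  then show "supported_in (K + 1) (gen_shift a b p \<phi>) \<and>
      (\<forall>N \<ge> K + 1. window_norm N (gen_shift a b p \<phi>) = window_norm N \<phi>)"
    by (simp add: supported_in_def window_norm_eq_sqrt window_sum_gen_shift[OF assms K])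
qed

lemma window_isometric_gen_coin:
  assumes "\<And>n. (c n)\<^sup>2 + (d n)\<^sup>2 + l\<^sup>2 = 1"
  shows "window_isometric 0 (gen_coin c d l)"
  unfolding window_isometric_def window_norm_eq_sqrt site_norm2_gen_coin assms
  by (simp add: supported_in_def gen_coin_def)

lemma gen_shift_linear:
  "gen_shift a b p (\<lambda>n s. z * \<phi> n s + \<psi> n s) = (\<lambda>n s. z * gen_shift a b p \<phi> n s + gen_shift a b p \<psi> n s)"
  by (intro ext) (simp add: gen_shift_def algebra_simps)

lemma gen_coin_linear:
  "gen_coin c d l (\<lambda>n s. z * \<phi> n s + \<psi> n s) = (\<lambda>n s. z * gen_coin c d l \<phi> n s + gen_coin c d l \<psi> n s)"
  by (intro ext) (simp add: gen_coin_def algebra_simps)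

lemma gen_shift_tendsto:
  "(\<And>n s. (\<lambda>k. X k n s) \<longlonglongrightarrow> \<phi> n s) \<Longrightarrow> (\<lambda>k. gen_shift a b p (X k) n s) \<longlonglongrightarrow> gen_shift a b p \<phi> n s"
  unfolding gen_shift_def by (cases s) (simp_all, (intro tendsto_intros; assumption)+)

lemma gen_coin_tendsto:
  "(\<And>n s. (\<lambda>k. X k n s) \<longlonglongrightarrow> \<phi> n s) \<Longrightarrow> (\<lambda>k. gen_coin c d l (X k) n s) \<longlonglongrightarrow> gen_coin c d l \<phi> n s"
  unfolding gen_coin_def by (cases s) (simp_all, (intro tendsto_intros; assumption)+)

definition coin_cos :: "real \<Rightarrow> real \<Rightarrow> real \<Rightarrow> int \<Rightarrow> real" where
  "coin_cos lam \<Phi> \<theta> n = lam * cos (2 * pi * (of_int n * \<Phi> + \<theta>))"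

definition coin_sin :: "real \<Rightarrow> real \<Rightarrow> real \<Rightarrow> int \<Rightarrow> real" where
  "coin_sin lam \<Phi> \<theta> n = lam * sin (2 * pi * (of_int n * \<Phi> + \<theta>))"

lemma cpl_sq: "lam \<in> {0..1} \<Longrightarrow> lam\<^sup>2 + (cpl lam)\<^sup>2 = 1"
  unfolding cpl_def by (simp add: power_le_one)

lemma coin_sq_sum: "lam \<in> {0..1} \<Longrightarrow> (coin_cos lam \<Phi> \<theta> n)\<^sup>2 + (coin_sin lam \<Phi> \<theta> n)\<^sup>2 + (cpl lam)\<^sup>2 = 1"
  using cpl_sq[of lam] sin_cos_squared_add2[of "2 * pi * (of_int n * \<Phi> + \<theta>)"]
  unfolding coin_cos_def coin_sin_def power_mult_distrib by (metis distrib_left mult.right_neutral)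

lemma UAMO_eq:
  "UAMO lam1 lam2 \<Phi> \<theta>
     = gen_shift lam1 (- cpl lam1) (-1) \<circ> gen_coin (coin_cos lam2 \<Phi> \<theta>) (coin_sin lam2 \<Phi> \<theta>) (cpl lam2)"
  by (simp add: UAMO_def Sop_def Qop_def gen_shift_def gen_coin_def coin_cos_def coin_sin_def
      Let_def fun_eq_iff)

lemma finite_range_UAMO: "finite_range 1 (UAMO lam1 lam2 \<Phi> \<theta>)"
  using finite_range_comp[OF finite_range_gen_shift finite_range_gen_coin] by (simp add: UAMO_eq)

lemma window_isometric_UAMO:
  assumes "lam1 \<in> {0..1}" "lam2 \<in> {0..1}"
  shows "window_isometric 1 (UAMO lam1 lam2 \<Phi> \<theta>)"
  using window_isometric_comp[OF window_isometric_gen_shift window_isometric_gen_coin]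
    cpl_sq[OF assms(1)] coin_sq_sum[OF assms(2)] by (simp add: UAMO_eq)

lemma l2_unitary_UAMO:
  assumes "lam1 \<in> {0..1}" "lam2 \<in> {0..1}"
  shows "l2_unitary (UAMO lam1 lam2 \<Phi> \<theta>)"
proof -
  let ?c = "coin_cos lam2 \<Phi> \<theta>" and ?d = "coin_sin lam2 \<Phi> \<theta>" and ?l = "cpl lam2"
  let ?S' = "gen_shift lam1 (cpl lam1) 1" and ?Q' = "gen_coin ?c (\<lambda>n. - ?d n) (- ?l)"
  have ab: "lam1\<^sup>2 + (cpl lam1)\<^sup>2 = 1" by (rule cpl_sq[OF assms(1)])
  have cd: "(?c n)\<^sup>2 + (?d n)\<^sup>2 + ?l\<^sup>2 = 1" for n by (rule coin_sq_sum[OF assms(2)])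
  show ?thesis
  proof (rule l2_unitaryI[where r = 1 and B = "?Q' \<circ> ?S'"])
    show "finite_range 1 (?Q' \<circ> ?S')"
      using finite_range_comp[OF finite_range_gen_coin finite_range_gen_shift] by simp
    show "window_isometric 1 (?Q' \<circ> ?S')"
      using window_isometric_comp[OF window_isometric_gen_coin window_isometric_gen_shift] ab cd
      by simp
    show "UAMO lam1 lam2 \<Phi> \<theta> ((?Q' \<circ> ?S') \<phi>) = \<phi>" for \<phi>
      using gen_coin_inverse[of ?c ?d ?l] gen_shift_inverse[of lam1 "- cpl lam1" "-1"] ab cd
      by (simp add: UAMO_eq)
    show "(?Q' \<circ> ?S') (UAMO lam1 lam2 \<Phi> \<theta> \<phi>) = \<phi>" for \<phi>
      using gen_coin_inverse[of ?c "\<lambda>n. - ?d n" "- ?l"] gen_shift_inverse[of lam1 "cpl lam1" 1] ab cd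
      by (simp add: UAMO_eq)
  qed (use finite_range_UAMO[of lam1 lam2 \<Phi> \<theta>] window_isometric_UAMO[OF assms, of \<Phi> \<theta>] in
      \<open>simp_all add: UAMO_eq gen_shift_linear gen_coin_linear gen_shift_tendsto gen_coin_tendsto\<close>)
qed

lemma l2_pointwise_limit:
  assumes "\<And>k. x k \<in> l2" "\<And>k. l2norm (x k) \<le> M" "\<And>n s. (\<lambda>k. x k n s) \<longlonglongrightarrow> X n s"
  shows "X \<in> l2" and "l2norm X \<le> M"
proof -
  have "window_norm N X \<le> M" for N
  proof (rule LIMSEQ_le_const2)
    show "(\<lambda>k. window_norm N (x k)) \<longlonglongrightarrow> window_norm N X"
      unfolding window_norm_eq_sqrt site_norm2_def by (intro tendsto_intros assms(3))
    show "\<exists>N'. \<forall>k\<ge>N'. window_norm N (x k) \<le> M"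
      using window_norm_le_l2norm[OF assms(1)] assms(2) order_trans by blast
  qed
  then show "X \<in> l2" "l2norm X \<le> M" by (fact l2_window_boundedI)+
qed

lemma l2_sum:
  fixes d :: "nat \<Rightarrow> state"
  assumes "\<And>j. d j \<in> l2"
  shows "(\<lambda>n s. \<Sum>j<k. d j n s) \<in> l2" and "l2norm (\<lambda>n s. \<Sum>j<k. d j n s) \<le> (\<Sum>j<k. l2norm (d j))"
proof -
  have "(\<lambda>n s. \<Sum>j<k. d j n s) \<in> l2 \<and> l2norm (\<lambda>n s. \<Sum>j<k. d j n s) \<le> (\<Sum>j<k. l2norm (d j))"
  proof (induction k)
    case (Suc k)
    then show ?case using l2_add[OF _ assms[of k], of "\<lambda>n s. \<Sum>j<k. d j n s"] by auto
  qed (simp add: l2_zero l2norm_zero)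
  then show "(\<lambda>n s. \<Sum>j<k. d j n s) \<in> l2" "l2norm (\<lambda>n s. \<Sum>j<k. d j n s) \<le> (\<Sum>j<k. l2norm (d j))"
    by blast+
qed

lemma l2_geometric_series:
  fixes d :: "nat \<Rightarrow> state"
  assumes l2: "\<And>j. d j \<in> l2" and bound: "\<And>j. l2norm (d j) \<le> C * q ^ j" and q: "0 \<le> q" "q < 1"
  obtains X where "X \<in> l2" "\<And>n s. (\<lambda>k. \<Sum>j<k. d j n s) \<longlonglongrightarrow> X n s"
proof -
  have summable: "summable (\<lambda>j. d j n s)" for n s
  proof (rule summable_comparison_test)
    show "\<exists>N. \<forall>j\<ge>N. norm (d j n s) \<le> C * q ^ j"
      using order_trans[OF norm_le_l2norm[OF l2] bound] by blast
    show "summable (\<lambda>j. C * q ^ j)" using q by simp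
  qed
  have bounded: "l2norm (\<lambda>n s. \<Sum>j<k. d j n s) \<le> C / (1 - q)" for k
  proof -
    have "0 \<le> C" using order_trans[OF l2norm_nonneg bound[of 0]] by simp
    have "l2norm (\<lambda>n s. \<Sum>j<k. d j n s) \<le> (\<Sum>j<k. C * q ^ j)"
      by (rule order_trans[OF l2_sum(2)[OF l2]], rule sum_mono, rule bound)
    also have "\<dots> = C * (1 - q ^ k) / (1 - q)" using q by (simp add: sum_distrib_left[symmetric] sum_gp_strict)
    also have "\<dots> \<le> C / (1 - q)" using q \<open>0 \<le> C\<close> by (simp add: divide_right_mono mult_left_le)
    finally show ?thesis .
  qed
  have "(\<lambda>n s. \<Sum>j. d j n s) \<in> l2"
    by (rule l2_pointwise_limit(1)[of "\<lambda>k n s. \<Sum>j<k. d j n s",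
          OF l2_sum(1)[OF l2] bounded summable_LIMSEQ[OF summable]])
  then show thesis using summable_LIMSEQ[OF summable] by (rule that)
qed

text \<open>Writing \<open>A R = id\<close>, the residuals
  \<open>r\<^sub>k\<^sub>+\<^sub>1 = r\<^sub>k - T (R r\<^sub>k)\<close> of the iteration \<open>x\<^sub>k\<^sub>+\<^sub>1 = x\<^sub>k + R r\<^sub>k\<close> shrink by the factor \<open>b / c\<close>.\<close>
lemma surjective_perturbation:
  fixes A T :: "state \<Rightarrow> state" and b c :: real
  assumes A_l2: "\<And>\<phi>. \<phi> \<in> l2 \<Longrightarrow> A \<phi> \<in> l2"
    and A_below: "\<And>\<phi>. \<phi> \<in> l2 \<Longrightarrow> c * l2norm \<phi> \<le> l2norm (A \<phi>)"
    and A_surj: "\<And>\<psi>. \<psi> \<in> l2 \<Longrightarrow> \<exists>\<phi>\<in>l2. A \<phi> = \<psi>"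
    and diff_l2: "\<And>\<phi>. \<phi> \<in> l2 \<Longrightarrow> (\<lambda>n s. T \<phi> n s - A \<phi> n s) \<in> l2"
    and diff_bound: "\<And>\<phi>. \<phi> \<in> l2 \<Longrightarrow> l2norm (\<lambda>n s. T \<phi> n s - A \<phi> n s) \<le> b * l2norm \<phi>"
    and bc: "0 \<le> b" "b < c"
    and T_add: "\<And>\<phi> \<psi>. T (\<lambda>n s. \<phi> n s + \<psi> n s) = (\<lambda>n s. T \<phi> n s + T \<psi> n s)"
    and T_cont: "\<And>X \<phi> n s. (\<And>n s. (\<lambda>k. X k n s) \<longlonglongrightarrow> \<phi> n s) \<Longrightarrow> (\<lambda>k. T (X k) n s) \<longlonglongrightarrow> T \<phi> n s"
    and \<psi>: "\<psi> \<in> l2"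
  shows "\<exists>\<phi>\<in>l2. T \<phi> = \<psi>"
proof -
  define q where "q = b / c"
  have c: "0 < c" and q: "0 \<le> q" "q < 1" using bc by (auto simp: q_def)
  define R where "R \<rho> = (SOME \<phi>. \<phi> \<in> l2 \<and> A \<phi> = \<rho>)" for \<rho>
  have R: "R \<rho> \<in> l2" "A (R \<rho>) = \<rho>" "l2norm (R \<rho>) \<le> l2norm \<rho> / c" if "\<rho> \<in> l2" for \<rho>
  proof -
    show R: "R \<rho> \<in> l2" "A (R \<rho>) = \<rho>"
      using someI_ex[OF A_surj[OF that, unfolded Bex_def]] unfolding R_def by blast+
    show "l2norm (R \<rho>) \<le> l2norm \<rho> / c" using A_below[OF R(1)] R(2) c by (simp add: field_simps)
  qed
  have T0: "T (\<lambda>n s. 0) = (\<lambda>n s. 0)"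
    using T_add[of "\<lambda>n s. 0" "\<lambda>n s. 0"] by (simp add: fun_eq_iff)
  define r where "r = rec_nat \<psi> (\<lambda>_ \<rho>. (\<lambda>n s. \<rho> n s - T (R \<rho>) n s))"
  have r_Suc: "r (Suc k) = (\<lambda>n s. r k n s - T (R (r k)) n s)" for k by (simp add: r_def)
  have r: "r k \<in> l2 \<and> l2norm (r k) \<le> q ^ k * l2norm \<psi>" for k
  proof (induction k)
    case (Suc k)
    then have rk: "r k \<in> l2" by blast
    have eq: "r (Suc k) = (\<lambda>n s. - 1 * (T (R (r k)) n s - A (R (r k)) n s))"
      unfolding r_Suc R(2)[OF rk] by simp
    have "l2norm (r (Suc k)) \<le> b * (l2norm (r k) / c)"
      unfolding eq l2_scale(2)[OF diff_l2[OF R(1)[OF rk]]]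
      using order_trans[OF diff_bound[OF R(1)[OF rk]] mult_left_mono[OF R(3)[OF rk] bc(1)]] by simp
    also have "\<dots> \<le> q ^ Suc k * l2norm \<psi>"
      using Suc.IH bc(1) c by (simp add: q_def mult_left_mono divide_right_mono field_simps)
    finally show ?case unfolding eq using l2_scale(1)[OF diff_l2[OF R(1)[OF rk]]] by blast
  qed (simp add: r_def \<psi>)
  define d where "d k = R (r k)" for k
  have T_partial: "T (\<lambda>n s. \<Sum>j<k. d j n s) = (\<lambda>n s. \<psi> n s - r k n s)" for k
  proof (induction k)
    case (Suc k)
    have "T (\<lambda>n s. \<Sum>j<Suc k. d j n s) = T (\<lambda>n s. (\<Sum>j<k. d j n s) + d k n s)" by simp
    also have "\<dots> = (\<lambda>n s. T (\<lambda>n s. \<Sum>j<k. d j n s) n s + T (d k) n s)" by (rule T_add)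
    also have "\<dots> = (\<lambda>n s. \<psi> n s - r (Suc k) n s)" unfolding Suc.IH by (simp add: r_Suc d_def algebra_simps)
    finally show ?case .
  qed (simp add: T0 r_def)
  have d_l2: "d j \<in> l2" for j using R(1) r by (simp add: d_def)
  have d_bound: "l2norm (d j) \<le> l2norm \<psi> / c * q ^ j" for j
  proof -
    have "l2norm (d j) \<le> l2norm (r j) / c" using R(3) r by (simp add: d_def)
    also have "\<dots> \<le> q ^ j * l2norm \<psi> / c" using r[of j] c by (simp add: divide_right_mono)
    finally show ?thesis by (simp add: mult.commute)
  qed
  obtain X where X: "X \<in> l2" "\<And>n s. (\<lambda>k. \<Sum>j<k. d j n s) \<longlonglongrightarrow> X n s"
    using l2_geometric_series[OF d_l2 d_bound q] by blast
  have "(\<lambda>k. r k n s) \<longlonglongrightarrow> 0" for n s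
  proof (rule Lim_null_comparison)
    show "\<forall>\<^sub>F k in sequentially. norm (r k n s) \<le> q ^ k * l2norm \<psi>"
      using order_trans[OF norm_le_l2norm] r by (intro always_eventually allI) blast
    show "(\<lambda>k. q ^ k * l2norm \<psi>) \<longlonglongrightarrow> 0" by (intro tendsto_mult_left_zero LIMSEQ_power_zero) (use q in simp)
  qed
  then have residual: "(\<lambda>k. \<psi> n s - r k n s) \<longlonglongrightarrow> \<psi> n s - 0" for n s by (intro tendsto_intros)
  have "T X n s = \<psi> n s" for n s
  proof (rule LIMSEQ_unique)
    show "(\<lambda>k. T (\<lambda>n s. \<Sum>j<k. d j n s) n s) \<longlonglongrightarrow> T X n s" by (rule T_cont[OF X(2)])
    show "(\<lambda>k. T (\<lambda>n s. \<Sum>j<k. d j n s) n s) \<longlonglongrightarrow> \<psi> n s"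
      using residual by (simp add: T_partial)
  qed
  then have "T X = \<psi>" by (simp add: fun_eq_iff)
  then show ?thesis using X(1) by blast
qed

definition quasimode :: "(state \<Rightarrow> state) \<Rightarrow> complex \<Rightarrow> real \<Rightarrow> state \<Rightarrow> bool" where
  "quasimode T z e \<psi> \<longleftrightarrow>
     (\<exists>K. supported_in K \<psi>) \<and> \<psi> \<noteq> (\<lambda>n s. 0) \<and> l2norm (op_minus T z \<psi>) \<le> e * l2norm \<psi>"

definition approx_eigenvalue :: "(state \<Rightarrow> state) \<Rightarrow> complex \<Rightarrow> bool" where
  "approx_eigenvalue T z \<longleftrightarrow> (\<forall>e>0. \<exists>\<psi>. quasimode T z e \<psi>)"

lemma quasimode_l2norm_pos:
  assumes "quasimode T z e \<psi>"
  shows "\<psi> \<in> l2" and "0 < l2norm \<psi>"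
proof -
  obtain K where "supported_in K \<psi>" using assms by (auto simp: quasimode_def)
  then show l2: "\<psi> \<in> l2" by (rule supported_imp_l2)
  have "l2norm \<psi> \<noteq> 0" using assms l2norm_eq_0_iff[OF l2] by (simp add: quasimode_def)
  then show "0 < l2norm \<psi>" using l2norm_nonneg[of \<psi>] by linarith
qed

context l2_unitary
begin

lemma additive: "T (\<lambda>n s. \<phi> n s + \<psi> n s) = (\<lambda>n s. T \<phi> n s + T \<psi> n s)"
  using linear[of 1] by simp

lemma op_minus_diff:
  "op_minus T z (\<lambda>n s. \<phi> n s - \<psi> n s) = (\<lambda>n s. op_minus T z \<phi> n s - op_minus T z \<psi> n s)"
  using linear[of "-1" \<psi> \<phi>] by (simp add: fun_eq_iff algebra_simps)

lemma op_minus_additive: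
  "op_minus T z (\<lambda>n s. \<phi> n s + \<psi> n s) = (\<lambda>n s. op_minus T z \<phi> n s + op_minus T z \<psi> n s)"
  by (simp add: additive fun_eq_iff algebra_simps)

lemma op_minus_tendsto:
  "(\<And>n s. (\<lambda>k. X k n s) \<longlonglongrightarrow> \<phi> n s) \<Longrightarrow> (\<lambda>k. op_minus T z (X k) n s) \<longlonglongrightarrow> op_minus T z \<phi> n s"
  by (intro tendsto_intros pointwise_continuous)

lemma l2_op_minus_closed: "\<phi> \<in> l2 \<Longrightarrow> op_minus T z \<phi> \<in> l2"
  by (simp add: l2_op_minus l2_closed)

lemma op_minus_upper:
  assumes "\<phi> \<in> l2"
  shows "l2norm (op_minus T z \<phi>) \<le> (1 + cmod z) * l2norm \<phi>"
  using l2_diff(2)[OF l2_closed[OF assms] l2_scale(1)[OF assms, of z]] l2norm_eq[OF assms]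
    l2_scale(2)[OF assms, of z] by (simp add: algebra_simps)

lemma op_minus_lower:
  assumes "\<phi> \<in> l2"
  shows "\<bar>1 - cmod z\<bar> * l2norm \<phi> \<le> l2norm (op_minus T z \<phi>)"
proof -
  have zl: "(\<lambda>n s. z * \<phi> n s) \<in> l2" by (rule l2_scale(1)[OF assms])
  have "l2norm (T \<phi>) \<le> l2norm (op_minus T z \<phi>) + l2norm (\<lambda>n s. z * \<phi> n s)"
    using l2_add(2)[OF l2_op_minus_closed[OF assms, of z] zl] by simp
  moreover have "l2norm (\<lambda>n s. z * \<phi> n s) \<le> l2norm (T \<phi>) + l2norm (op_minus T z \<phi>)"
    using l2_diff(2)[OF l2_closed[OF assms] l2_op_minus_closed[OF assms, of z]] by simp
  ultimately show ?thesis
    unfolding l2norm_eq[OF assms] l2_scale(2)[OF assms] by (simp add: abs_if algebra_simps)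
qed

lemma op_minus_surjective_inside:
  assumes "cmod z < 1" "\<psi> \<in> l2"
  shows "\<exists>\<phi>\<in>l2. op_minus T z \<phi> = \<psi>"
proof (rule surjective_perturbation[where A = T and b = "cmod z" and c = 1])
  fix \<phi> :: state assume "\<phi> \<in> l2"
  then show "(\<lambda>n s. op_minus T z \<phi> n s - T \<phi> n s) \<in> l2"
    "l2norm (\<lambda>n s. op_minus T z \<phi> n s - T \<phi> n s) \<le> cmod z * l2norm \<phi>"
    using l2_scale[of \<phi> "- z"] by simp_all
qed (use assms in \<open>simp_all add: l2_closed l2norm_eq surjective op_minus_additive op_minus_tendsto\<close>)

lemma op_minus_surjective_outside:
  assumes "1 < cmod z" "\<psi> \<in> l2"
  shows "\<exists>\<phi>\<in>l2. op_minus T z \<phi> = \<psi>"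
proof (rule surjective_perturbation[where A = "\<lambda>\<phi> n s. - z * \<phi> n s" and b = 1 and c = "cmod z"])
  fix \<rho> :: state assume "\<rho> \<in> l2"
  have "z \<noteq> 0" using assms(1) by auto
  then show "\<exists>\<phi>\<in>l2. (\<lambda>n s. - z * \<phi> n s) = \<rho>"
    using l2_scale(1)[OF \<open>\<rho> \<in> l2\<close>, of "- 1 / z"] by (intro bexI[of _ "\<lambda>n s. (- 1 / z) * \<rho> n s"]) simp_all
next
  fix \<phi> :: state assume "\<phi> \<in> l2"
  then show "(\<lambda>n s. - z * \<phi> n s) \<in> l2" "cmod z * l2norm \<phi> \<le> l2norm (\<lambda>n s. - z * \<phi> n s)"
    using l2_scale[of \<phi> "- z"] by simp_all
qed (use assms in \<open>simp_all add: l2_closed l2norm_eq op_minus_additive op_minus_tendsto\<close>)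

text \<open>Starting from a point \<open>z'\<close> inside the disc where \<open>T - z'\<close> is already onto, a lower bound
  \<open>c\<close> for \<open>T - z\<close> survives the perturbation \<open>z' - z\<close> as long as \<open>\<bar>z' - z\<bar> < c / 2\<close>.\<close>
lemma op_minus_surjective:
  assumes c: "0 < c" "\<And>\<phi>. \<phi> \<in> l2 \<Longrightarrow> c * l2norm \<phi> \<le> l2norm (op_minus T z \<phi>)"
    and \<psi>: "\<psi> \<in> l2"
  shows "\<exists>\<phi>\<in>l2. op_minus T z \<phi> = \<psi>"
proof (cases "1 < cmod z")
  case True
  then show ?thesis using op_minus_surjective_outside \<psi> by blast
next
  case False
  define e where "e = min c 1 / 3"
  have e: "0 < e" "e \<le> c / 3" "e \<le> 1 / 3" using c(1) by (auto simp: e_def)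
  define z' where "z' = of_real (1 - e) * z"
  have "cmod z' = (1 - e) * cmod z"
    unfolding z'_def norm_mult norm_of_real using e by simp
  also have "\<dots> \<le> 1 - e" using False e mult_left_mono[of "cmod z" 1 "1 - e"] by simp
  finally have z'_inside: "cmod z' < 1" using e by simp
  have z'_close: "cmod (z' - z) \<le> e"
  proof -
    have "cmod (z' - z) = e * cmod z" using e by (simp add: z'_def algebra_simps norm_mult)
    also have "\<dots> \<le> e" using False e by (simp add: mult_left_le)
    finally show ?thesis .
  qed
  show ?thesis
  proof (rule surjective_perturbation[where A = "op_minus T z'" and b = e and c = "c - e"])
    fix \<phi> :: state assume \<phi>: "\<phi> \<in> l2"
    have diff: "(\<lambda>n s. op_minus T z \<phi> n s - op_minus T z' \<phi> n s) = (\<lambda>n s. (z' - z) * \<phi> n s)"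
      by (simp add: algebra_simps)
    show "(\<lambda>n s. op_minus T z \<phi> n s - op_minus T z' \<phi> n s) \<in> l2"
      unfolding diff by (rule l2_scale(1)[OF \<phi>])
    show bound: "l2norm (\<lambda>n s. op_minus T z \<phi> n s - op_minus T z' \<phi> n s) \<le> e * l2norm \<phi>"
      unfolding diff l2_scale(2)[OF \<phi>] by (rule mult_right_mono[OF z'_close l2norm_nonneg])
    have "c * l2norm \<phi> \<le> l2norm (op_minus T z' \<phi>) + l2norm (\<lambda>n s. (z' - z) * \<phi> n s)"
      using c(2)[OF \<phi>] l2_add(2)[OF l2_op_minus_closed[OF \<phi>] l2_scale(1)[OF \<phi>], of z' "z' - z"]
      by (simp add: algebra_simps)
    then show "(c - e) * l2norm \<phi> \<le> l2norm (op_minus T z' \<phi>)"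
      using bound unfolding diff by (simp add: algebra_simps)
  next
    show "\<exists>\<phi>\<in>l2. op_minus T z' \<phi> = \<rho>" if "\<rho> \<in> l2" for \<rho>
      by (rule op_minus_surjective_inside[OF z'_inside that])
  qed (use e \<psi> in \<open>simp_all add: l2_op_minus_closed op_minus_additive op_minus_tendsto\<close>)
qed

lemma not_in_spectrum:
  assumes c: "0 < c" "\<And>\<phi>. \<phi> \<in> l2 \<Longrightarrow> c * l2norm \<phi> \<le> l2norm (op_minus T z \<phi>)"
  shows "z \<notin> op_spectrum T"
proof -
  define R where "R \<psi> = (SOME \<phi>. \<phi> \<in> l2 \<and> op_minus T z \<phi> = \<psi>)" for \<psi>
  have R: "R \<psi> \<in> l2" "op_minus T z (R \<psi>) = \<psi>" if "\<psi> \<in> l2" for \<psi>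
    using someI_ex[OF op_minus_surjective[OF c that, unfolded Bex_def]] unfolding R_def by blast+
  have injective: "\<phi> = \<phi>'" if "\<phi> \<in> l2" "\<phi>' \<in> l2" "op_minus T z \<phi> = op_minus T z \<phi>'" for \<phi> \<phi>'
  proof -
    let ?d = "\<lambda>n s. \<phi> n s - \<phi>' n s"
    have d: "?d \<in> l2" by (rule l2_diff(1)[OF that(1,2)])
    have "op_minus T z ?d = (\<lambda>n s. 0)" using that(3) by (simp add: op_minus_diff fun_eq_iff)
    then have "l2norm ?d = 0"
      using c(2)[OF d] c(1) l2norm_zero l2norm_nonneg[of ?d] by (simp add: mult_le_0_iff)
    then show ?thesis using l2norm_eq_0_iff[OF d] by (simp add: fun_eq_iff)
  qed
  have "R (op_minus T z \<psi>) = \<psi>" if "\<psi> \<in> l2" for \<psi>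
    using injective[OF R(1) that R(2)] l2_op_minus_closed that by blast
  moreover have "l2norm (R \<psi>) \<le> 1 / c * l2norm \<psi>" if "\<psi> \<in> l2" for \<psi>
    using c(2)[OF R(1)[OF that]] R(2)[OF that] c(1) by (simp add: field_simps)
  ultimately show ?thesis using R unfolding op_spectrum_def by blast
qed

lemma spectrum_on_circle:
  assumes "z \<in> op_spectrum T"
  shows "cmod z = 1"
proof (rule ccontr)
  assume "cmod z \<noteq> 1"
  then have "0 < \<bar>1 - cmod z\<bar>" by simp
  from not_in_spectrum[OF this op_minus_lower] assms show False by blast
qed

lemma bounded_below_if_bounded_below_on_finite:
  assumes e: "0 < e" "\<And>\<psi> K. supported_in K \<psi> \<Longrightarrow> e * l2norm \<psi> \<le> l2norm (op_minus T z \<psi>)"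
    and \<phi>: "\<phi> \<in> l2"
  shows "e * l2norm \<phi> \<le> l2norm (op_minus T z \<phi>)"
proof (rule field_le_epsilon)
  fix \<epsilon> :: real assume "0 < \<epsilon>"
  define D where "D = e + 1 + cmod z"
  have D: "0 < D" using e by (simp add: D_def add_pos_nonneg)
  then have "0 < \<epsilon> / D" using \<open>0 < \<epsilon>\<close> by simp
  then obtain K where K: "l2norm (\<lambda>n s. \<phi> n s - truncate K \<phi> n s) \<le> \<epsilon> / D"
    by (rule l2_truncate_approx[OF \<phi>])
  define t where "t = truncate K \<phi>"
  define u where "u = (\<lambda>n s. \<phi> n s - t n s)"
  have t: "t \<in> l2" unfolding t_def by (rule supported_imp_l2(1)[OF supported_truncate])
  have u: "u \<in> l2" "D * l2norm u \<le> \<epsilon>"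
    using l2_diff(1)[OF \<phi> t] mult_left_mono[OF K, of D] D by (simp_all add: u_def t_def)
  have split: "l2norm \<phi> \<le> l2norm t + l2norm u" using l2_add(2)[OF t u(1)] by (simp add: u_def)
  have finite: "e * l2norm t \<le> l2norm (op_minus T z t)"
    unfolding t_def by (rule e(2)[OF supported_truncate])
  have "op_minus T z t = (\<lambda>n s. op_minus T z \<phi> n s - op_minus T z u n s)"
    unfolding op_minus_diff[symmetric] by (simp add: u_def)
  then have "l2norm (op_minus T z t) \<le> l2norm (op_minus T z \<phi>) + l2norm (op_minus T z u)"
    using l2_diff(2)[OF l2_op_minus_closed[OF \<phi>, of z] l2_op_minus_closed[OF u(1), of z]] by simp
  then have tail: "l2norm (op_minus T z t) \<le> l2norm (op_minus T z \<phi>) + (1 + cmod z) * l2norm u"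
    using op_minus_upper[OF u(1), of z] by linarith
  have "e * l2norm \<phi> \<le> e * l2norm t + e * l2norm u"
    using mult_left_mono[OF split, of e] e(1) by (simp add: distrib_left)
  also have "\<dots> \<le> l2norm (op_minus T z \<phi>) + D * l2norm u"
    using finite tail by (simp add: D_def algebra_simps)
  finally show "e * l2norm \<phi> \<le> l2norm (op_minus T z \<phi>) + \<epsilon>" using u(2) by linarith
qed

lemma spectrum_iff_approx_eigenvalue: "z \<in> op_spectrum T \<longleftrightarrow> approx_eigenvalue T z"
proof
  assume z: "z \<in> op_spectrum T"
  show "approx_eigenvalue T z"
  proof (rule ccontr)
    assume "\<not> approx_eigenvalue T z"
    then obtain e where e: "0 < e" and no_quasimode: "\<And>\<psi>. \<not> quasimode T z e \<psi>"
      unfolding approx_eigenvalue_def by blast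
    have "e * l2norm \<psi> \<le> l2norm (op_minus T z \<psi>)" if "supported_in K \<psi>" for \<psi> K
      using no_quasimode[of \<psi>] that by (cases "\<psi> = (\<lambda>n s. 0)") (auto simp: quasimode_def l2norm_zero)
    then show False
      using z not_in_spectrum[OF e] bounded_below_if_bounded_below_on_finite[OF e] by blast
  qed
next
  assume approx: "approx_eigenvalue T z"
  show "z \<in> op_spectrum T"
  proof (rule ccontr)
    assume "z \<notin> op_spectrum T"
    then obtain R C where R: "\<And>\<psi>. \<psi> \<in> l2 \<Longrightarrow> R (op_minus T z \<psi>) = \<psi>"
      and C: "\<And>\<psi>. \<psi> \<in> l2 \<Longrightarrow> l2norm (R \<psi>) \<le> C * l2norm \<psi>"
      unfolding op_spectrum_def by blast
    have "0 < 1 / (2 * (\<bar>C\<bar> + 1))" by (simp add: add_pos_nonneg)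
    then obtain \<psi> where \<psi>: "quasimode T z (1 / (2 * (\<bar>C\<bar> + 1))) \<psi>"
      using approx unfolding approx_eigenvalue_def by blast
    note \<psi>_l2 = quasimode_l2norm_pos[OF \<psi>]
    have "l2norm \<psi> \<le> C * l2norm (op_minus T z \<psi>)"
      using C[OF l2_op_minus_closed[OF \<psi>_l2(1), of z]] R[OF \<psi>_l2(1)] by simp
    also have "\<dots> \<le> \<bar>C\<bar> * (1 / (2 * (\<bar>C\<bar> + 1)) * l2norm \<psi>)"
      using \<psi> by (intro mult_mono) (auto simp: quasimode_def)
    also have "\<dots> < l2norm \<psi>" using \<psi>_l2(2) by (simp add: field_simps add_nonneg_pos)
    finally show False by simp
  qed
qed

end

definition fourier_window :: "real \<Rightarrow> real \<Rightarrow> int \<Rightarrow> (int \<Rightarrow> complex) \<Rightarrow> int \<Rightarrow> complex" where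
  "fourier_window \<Phi> \<theta>' J f m = (\<Sum>n\<in>{-J..J}. cis (2 * pi * (of_int n * (of_int m * \<Phi> + \<theta>'))) * f n)"

text \<open>It exchanges the roles of \<open>\<lambda>\<^sub>1\<close> and \<open>\<lambda>\<^sub>2\<close> and of \<open>\<theta>\<close> and \<open>\<theta>'\<close>
  (see \<open>UAMO_aubry_dual\<close>).\<close>
definition aubry_dual :: "real \<Rightarrow> real \<Rightarrow> real \<Rightarrow> int \<Rightarrow> state \<Rightarrow> state" where
  "aubry_dual \<Phi> \<theta> \<theta>' J g m s = cis (- (2 * pi * (of_int m * \<theta>))) *
     (if s then cnj (fourier_window \<Phi> \<theta>' J (\<lambda>n. g n True) m) - \<i> * cnj (fourier_window \<Phi> \<theta>' J (\<lambda>n. g n False) m)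
      else - \<i> * cnj (fourier_window \<Phi> \<theta>' J (\<lambda>n. g n True) m) + cnj (fourier_window \<Phi> \<theta>' J (\<lambda>n. g n False) m))"

lemma fourier_window_add:
  "fourier_window \<Phi> \<theta>' J (\<lambda>n. f n + g n) m = fourier_window \<Phi> \<theta>' J f m + fourier_window \<Phi> \<theta>' J g m"
  unfolding fourier_window_def by (simp add: sum.distrib algebra_simps)

lemma fourier_window_diff:
  "fourier_window \<Phi> \<theta>' J (\<lambda>n. f n - g n) m = fourier_window \<Phi> \<theta>' J f m - fourier_window \<Phi> \<theta>' J g m"
  unfolding fourier_window_def by (simp add: sum_subtractf algebra_simps)

lemma fourier_window_mult:
  "fourier_window \<Phi> \<theta>' J (\<lambda>n. c * f n) m = c * fourier_window \<Phi> \<theta>' J f m"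
  unfolding fourier_window_def by (simp add: sum_distrib_left algebra_simps)

lemma norm_fourier_window_le: "cmod (fourier_window \<Phi> \<theta>' J f m) \<le> (\<Sum>n\<in>{-J..J}. cmod (f n))"
  unfolding fourier_window_def by (rule order_trans[OF norm_sum]) (simp add: norm_mult)

lemma fourier_window_shift:
  assumes "\<And>n. J - \<bar>p\<bar> < \<bar>n\<bar> \<Longrightarrow> f n = 0"
  shows "fourier_window \<Phi> \<theta>' J (\<lambda>n. f (n + p)) m
    = cis (- (2 * pi * (of_int p * (of_int m * \<Phi> + \<theta>')))) * fourier_window \<Phi> \<theta>' J f m"
proof -
  define y where "y = of_int m * \<Phi> + \<theta>'"
  define h where "h k = cis (2 * pi * (of_int (k - p) * y)) * f k" for k
  have "fourier_window \<Phi> \<theta>' J (\<lambda>n. f (n + p)) m = (\<Sum>n\<in>{-J..J}. h (n + p))"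
    unfolding fourier_window_def h_def y_def by simp
  also have "\<dots> = (\<Sum>n\<in>{-J..J}. h n)"
    by (rule sum_window_shift[where K = "J - \<bar>p\<bar>"]) (simp_all add: h_def assms)
  also have "\<dots> = (\<Sum>n\<in>{-J..J}. cis (- (2 * pi * (of_int p * y))) * (cis (2 * pi * (of_int n * y)) * f n))"
    unfolding h_def by (intro sum.cong refl) (simp add: cis_mult algebra_simps)
  finally show ?thesis unfolding fourier_window_def y_def by (simp add: sum_distrib_left)
qed

lemma fourier_window_mult_cis:
  "fourier_window \<Phi> \<theta>' J (\<lambda>n. cis (2 * pi * (of_int n * \<Phi> + \<theta>)) * f n) m
     = cis (2 * pi * \<theta>) * fourier_window \<Phi> \<theta>' J f (m + 1)" (is ?plus)
  "fourier_window \<Phi> \<theta>' J (\<lambda>n. cis (- (2 * pi * (of_int n * \<Phi> + \<theta>))) * f n) m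
     = cis (- (2 * pi * \<theta>)) * fourier_window \<Phi> \<theta>' J f (m - 1)" (is ?minus)
proof -
  have "cis (2 * pi * (of_int n * (of_int m * \<Phi> + \<theta>'))) * cis (2 * pi * (of_int n * \<Phi> + \<theta>))
      = cis (2 * pi * \<theta>) * cis (2 * pi * (of_int n * (of_int (m + 1) * \<Phi> + \<theta>')))"
    "cis (2 * pi * (of_int n * (of_int m * \<Phi> + \<theta>'))) * cis (- (2 * pi * (of_int n * \<Phi> + \<theta>)))
      = cis (- (2 * pi * \<theta>)) * cis (2 * pi * (of_int n * (of_int (m - 1) * \<Phi> + \<theta>')))" for n
    unfolding cis_mult by (rule arg_cong[where f = cis], simp add: algebra_simps)+
  then show ?plus ?minus
    unfolding fourier_window_def sum_distrib_left by (simp_all add: mult.assoc[symmetric])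
qed

lemma fourier_window_cos:
  "fourier_window \<Phi> \<theta>' J (\<lambda>n. of_real (cos (2 * pi * (of_int n * \<Phi> + \<theta>))) * f n) m
   = 1 / 2 * (cis (2 * pi * \<theta>) * fourier_window \<Phi> \<theta>' J f (m + 1)
              + cis (- (2 * pi * \<theta>)) * fourier_window \<Phi> \<theta>' J f (m - 1))"
proof -
  have "complex_of_real (cos x) * y = 1 / 2 * (cis x * y + cis (- x) * y)" for x y
    by (simp add: complex_eq_iff; simp add: field_simps)
  then show ?thesis
    by (simp only: fourier_window_mult fourier_window_add fourier_window_mult_cis)
qed

lemma fourier_window_sin:
  "fourier_window \<Phi> \<theta>' J (\<lambda>n. of_real (sin (2 * pi * (of_int n * \<Phi> + \<theta>))) * f n) m
   = - \<i> / 2 * (cis (2 * pi * \<theta>) * fourier_window \<Phi> \<theta>' J f (m + 1)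
                - cis (- (2 * pi * \<theta>)) * fourier_window \<Phi> \<theta>' J f (m - 1))"
proof -
  have "complex_of_real (sin x) * y = - \<i> / 2 * (cis x * y - cis (- x) * y)" for x y
    by (simp add: complex_eq_iff; simp add: field_simps)
  then show ?thesis
    by (simp only: fourier_window_mult fourier_window_diff fourier_window_mult_cis)
qed

lemma fourier_window_gen_shift:
  fixes \<Phi> \<theta>' a b :: real and J m :: int and g :: state
  assumes "\<And>n s. J - 1 < \<bar>n\<bar> \<Longrightarrow> g n s = 0"
  defines "Y \<equiv> cis (2 * pi * (of_int m * \<Phi> + \<theta>'))"
  shows "fourier_window \<Phi> \<theta>' J (\<lambda>n. gen_shift a b (-1) g n True) m
      = of_real a * Y * fourier_window \<Phi> \<theta>' J (\<lambda>n. g n True) m + of_real b * fourier_window \<Phi> \<theta>' J (\<lambda>n. g n False) m"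
    and "fourier_window \<Phi> \<theta>' J (\<lambda>n. gen_shift a b (-1) g n False) m
      = of_real a * cnj Y * fourier_window \<Phi> \<theta>' J (\<lambda>n. g n False) m - of_real b * fourier_window \<Phi> \<theta>' J (\<lambda>n. g n True) m"
proof -
  define y where "y = of_int m * \<Phi> + \<theta>'"
  have "cis (- (2 * pi * (of_int (-1) * y))) = Y" "cis (- (2 * pi * (of_int 1 * y))) = cnj Y"
    by (simp_all add: Y_def y_def cis_cnj algebra_simps)
  then have "fourier_window \<Phi> \<theta>' J (\<lambda>n. g (n + -1) True) m = Y * fourier_window \<Phi> \<theta>' J (\<lambda>n. g n True) m"
    "fourier_window \<Phi> \<theta>' J (\<lambda>n. g (n + 1) False) m = cnj Y * fourier_window \<Phi> \<theta>' J (\<lambda>n. g n False) m"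
    using fourier_window_shift[of J "-1" "\<lambda>n. g n True" \<Phi> \<theta>' m, folded y_def]
      fourier_window_shift[of J 1 "\<lambda>n. g n False" \<Phi> \<theta>' m, folded y_def] assms(1)
    by simp_all
  then show "fourier_window \<Phi> \<theta>' J (\<lambda>n. gen_shift a b (-1) g n True) m
      = of_real a * Y * fourier_window \<Phi> \<theta>' J (\<lambda>n. g n True) m + of_real b * fourier_window \<Phi> \<theta>' J (\<lambda>n. g n False) m"
    "fourier_window \<Phi> \<theta>' J (\<lambda>n. gen_shift a b (-1) g n False) m
      = of_real a * cnj Y * fourier_window \<Phi> \<theta>' J (\<lambda>n. g n False) m - of_real b * fourier_window \<Phi> \<theta>' J (\<lambda>n. g n True) m"
    by (simp_all add: gen_shift_def fourier_window_add fourier_window_diff fourier_window_mult)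
qed

lemma cnj_fourier_window_gen_coin:
  fixes \<Phi> \<theta> \<theta>' lam l :: real and J k :: int and \<psi> :: state
  defines "a \<equiv> \<lambda>k. cnj (fourier_window \<Phi> \<theta>' J (\<lambda>n. \<psi> n True) k)"
    and "b \<equiv> \<lambda>k. cnj (fourier_window \<Phi> \<theta>' J (\<lambda>n. \<psi> n False) k)"
    and "T \<equiv> cis (2 * pi * \<theta>)"
  shows "2 * cnj (fourier_window \<Phi> \<theta>' J (\<lambda>n. gen_coin (coin_cos lam \<Phi> \<theta>) (coin_sin lam \<Phi> \<theta>) l \<psi> n True) k)
      = of_real lam * (cnj T * a (k + 1) + T * a (k - 1)) - 2 * \<i> * of_real l * a k
        - \<i> * of_real lam * (cnj T * b (k + 1) - T * b (k - 1))"
    and "2 * cnj (fourier_window \<Phi> \<theta>' J (\<lambda>n. gen_coin (coin_cos lam \<Phi> \<theta>) (coin_sin lam \<Phi> \<theta>) l \<psi> n False) k)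
      = \<i> * of_real lam * (cnj T * a (k + 1) - T * a (k - 1))
        + of_real lam * (cnj T * b (k + 1) + T * b (k - 1)) + 2 * \<i> * of_real l * b k"
proof -
  define A where "A k = fourier_window \<Phi> \<theta>' J (\<lambda>n. \<psi> n True) k" for k
  define B where "B k = fourier_window \<Phi> \<theta>' J (\<lambda>n. \<psi> n False) k" for k
  let ?c = "\<lambda>n. complex_of_real (cos (2 * pi * (of_int n * \<Phi> + \<theta>)))"
  let ?s = "\<lambda>n. complex_of_real (sin (2 * pi * (of_int n * \<Phi> + \<theta>)))"
  have "(\<lambda>n. gen_coin (coin_cos lam \<Phi> \<theta>) (coin_sin lam \<Phi> \<theta>) l \<psi> n True)
      = (\<lambda>n. of_real lam * (?c n * \<psi> n True) + \<i> * of_real l * \<psi> n True - of_real lam * (?s n * \<psi> n False))"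
    "(\<lambda>n. gen_coin (coin_cos lam \<Phi> \<theta>) (coin_sin lam \<Phi> \<theta>) l \<psi> n False)
      = (\<lambda>n. of_real lam * (?s n * \<psi> n True) + of_real lam * (?c n * \<psi> n False) - \<i> * of_real l * \<psi> n False)"
    by (simp_all add: gen_coin_def coin_cos_def coin_sin_def fun_eq_iff algebra_simps)
  moreover have "cis (2 * pi * \<theta>) = T" "cis (- (2 * pi * \<theta>)) = cnj T"
    by (simp_all add: T_def cis_cnj)
  ultimately have F: "fourier_window \<Phi> \<theta>' J (\<lambda>n. gen_coin (coin_cos lam \<Phi> \<theta>) (coin_sin lam \<Phi> \<theta>) l \<psi> n True) k
      = of_real lam * (1 / 2 * (T * A (k + 1) + cnj T * A (k - 1))) + \<i> * of_real l * A k
        - of_real lam * (- \<i> / 2 * (T * B (k + 1) - cnj T * B (k - 1)))"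
    "fourier_window \<Phi> \<theta>' J (\<lambda>n. gen_coin (coin_cos lam \<Phi> \<theta>) (coin_sin lam \<Phi> \<theta>) l \<psi> n False) k
      = of_real lam * (- \<i> / 2 * (T * A (k + 1) - cnj T * A (k - 1)))
        + of_real lam * (1 / 2 * (T * B (k + 1) + cnj T * B (k - 1))) - \<i> * of_real l * B k"
    unfolding A_def B_def
    by (simp_all only: fourier_window_add fourier_window_diff fourier_window_mult
        fourier_window_cos fourier_window_sin)
  show "2 * cnj (fourier_window \<Phi> \<theta>' J (\<lambda>n. gen_coin (coin_cos lam \<Phi> \<theta>) (coin_sin lam \<Phi> \<theta>) l \<psi> n True) k)
      = of_real lam * (cnj T * a (k + 1) + T * a (k - 1)) - 2 * \<i> * of_real l * a k
        - \<i> * of_real lam * (cnj T * b (k + 1) - T * b (k - 1))"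
    "2 * cnj (fourier_window \<Phi> \<theta>' J (\<lambda>n. gen_coin (coin_cos lam \<Phi> \<theta>) (coin_sin lam \<Phi> \<theta>) l \<psi> n False) k)
      = \<i> * of_real lam * (cnj T * a (k + 1) - T * a (k - 1))
        + of_real lam * (cnj T * b (k + 1) + T * b (k - 1)) + 2 * \<i> * of_real l * b k"
    unfolding F a_def b_def A_def B_def by (simp; algebra)+
qed

lemma cpl_sq_complex: "lam \<in> {0..1} \<Longrightarrow> complex_of_real lam * of_real lam + of_real (cpl lam) * of_real (cpl lam) = 1"
  using cpl_sq by (metis of_real_1 of_real_add of_real_mult power2_eq_square)

lemma coin_dual_shift:
  assumes lam: "lam \<in> {0..1}" and g: "\<And>n s. J - 1 < \<bar>n\<bar> \<Longrightarrow> g n s = 0"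
  shows "gen_coin (coin_cos lam \<Phi> \<theta>') (coin_sin lam \<Phi> \<theta>') (cpl lam)
           (aubry_dual \<Phi> \<theta> \<theta>' J (gen_shift lam (- cpl lam) (-1) g))
         = aubry_dual \<Phi> \<theta> \<theta>' J g"
proof (intro ext)
  fix m s
  define x where "x = 2 * pi * (of_int m * \<Phi> + \<theta>')"
  define A where "A = fourier_window \<Phi> \<theta>' J (\<lambda>n. g n True) m"
  define B where "B = fourier_window \<Phi> \<theta>' J (\<lambda>n. g n False) m"
  define G where "G = cis (- (2 * pi * (of_int m * \<theta>)))"
  let ?Sg = "gen_shift lam (- cpl lam) (-1) g"
  have D_Sg: "aubry_dual \<Phi> \<theta> \<theta>' J ?Sg m True
      = G * (cnj (of_real lam * cis x * A - of_real (cpl lam) * B) - \<i> * cnj (of_real lam * cnj (cis x) * B + of_real (cpl lam) * A))"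
    "aubry_dual \<Phi> \<theta> \<theta>' J ?Sg m False
      = G * (- \<i> * cnj (of_real lam * cis x * A - of_real (cpl lam) * B) + cnj (of_real lam * cnj (cis x) * B + of_real (cpl lam) * A))"
  proof -
    have "fourier_window \<Phi> \<theta>' J (\<lambda>n. ?Sg n True) m = of_real lam * cis x * A - of_real (cpl lam) * B"
      "fourier_window \<Phi> \<theta>' J (\<lambda>n. ?Sg n False) m = of_real lam * cnj (cis x) * B + of_real (cpl lam) * A"
      using fourier_window_gen_shift[OF g, where \<Phi> = \<Phi> and \<theta>' = \<theta>' and m = m and a = lam and b = "- cpl lam"] by (simp_all add: A_def B_def x_def)
    then show "aubry_dual \<Phi> \<theta> \<theta>' J ?Sg m True
      = G * (cnj (of_real lam * cis x * A - of_real (cpl lam) * B) - \<i> * cnj (of_real lam * cnj (cis x) * B + of_real (cpl lam) * A))"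
      "aubry_dual \<Phi> \<theta> \<theta>' J ?Sg m False
      = G * (- \<i> * cnj (of_real lam * cis x * A - of_real (cpl lam) * B) + cnj (of_real lam * cnj (cis x) * B + of_real (cpl lam) * A))"
      by (simp_all add: aubry_dual_def G_def)
  qed
  have D_g: "aubry_dual \<Phi> \<theta> \<theta>' J g m True = G * (cnj A - \<i> * cnj B)"
    "aubry_dual \<Phi> \<theta> \<theta>' J g m False = G * (- \<i> * cnj A + cnj B)"
    by (simp_all add: aubry_dual_def A_def B_def G_def)
  have coin: "complex_of_real (coin_cos lam \<Phi> \<theta>' m) = of_real lam * of_real (cos x)"
    "complex_of_real (coin_sin lam \<Phi> \<theta>' m) = of_real lam * of_real (sin x)"
    by (simp_all add: coin_cos_def coin_sin_def x_def)
  have cis_x: "cis x = of_real (cos x) + \<i> * of_real (sin x)" "cnj (cis x) = of_real (cos x) - \<i> * of_real (sin x)"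
    by (simp_all add: complex_eq_iff)
  have cos_sin: "complex_of_real (cos x) * of_real (cos x) + of_real (sin x) * of_real (sin x) = 1"
    by (metis of_real_1 of_real_add of_real_mult power2_eq_square sin_cos_squared_add2)
  note cpl = cpl_sq_complex[OF lam]
  have ii: "\<i> * \<i> = (-1 :: complex)" by simp
  note cnj_simps = complex_cnj_diff complex_cnj_add complex_cnj_mult complex_cnj_complex_of_real
    complex_cnj_cnj complex_cnj_i complex_cnj_minus
  have "gen_coin (coin_cos lam \<Phi> \<theta>') (coin_sin lam \<Phi> \<theta>') (cpl lam) (aubry_dual \<Phi> \<theta> \<theta>' J ?Sg) m True
      = aubry_dual \<Phi> \<theta> \<theta>' J g m True"
    unfolding gen_coin_def if_True D_Sg D_g coin
    apply (simp only: cnj_simps)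
    using cis_x cos_sin cpl ii by algebra
  moreover have "gen_coin (coin_cos lam \<Phi> \<theta>') (coin_sin lam \<Phi> \<theta>') (cpl lam) (aubry_dual \<Phi> \<theta> \<theta>' J ?Sg) m False
      = aubry_dual \<Phi> \<theta> \<theta>' J g m False"
    unfolding gen_coin_def if_False bool.simps D_Sg D_g coin
    apply (simp only: cnj_simps)
    using cis_x cos_sin cpl ii by algebra
  ultimately show "gen_coin (coin_cos lam \<Phi> \<theta>') (coin_sin lam \<Phi> \<theta>') (cpl lam) (aubry_dual \<Phi> \<theta> \<theta>' J ?Sg) m s
      = aubry_dual \<Phi> \<theta> \<theta>' J g m s"
    by (cases s) simp_all
qed

lemma shift_dual_coin:
  assumes lam: "lam \<in> {0..1}"
  shows "gen_shift lam (- cpl lam) (-1)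
           (aubry_dual \<Phi> \<theta> \<theta>' J (gen_coin (coin_cos lam \<Phi> \<theta>) (coin_sin lam \<Phi> \<theta>) (cpl lam) \<psi>))
         = aubry_dual \<Phi> \<theta> \<theta>' J \<psi>"
proof (intro ext)
  fix m s
  define a where "a k = cnj (fourier_window \<Phi> \<theta>' J (\<lambda>n. \<psi> n True) k)" for k
  define b where "b k = cnj (fourier_window \<Phi> \<theta>' J (\<lambda>n. \<psi> n False) k)" for k
  define T where "T = cis (2 * pi * \<theta>)"
  define G where "G k = cis (- (2 * pi * (of_int k * \<theta>)))" for k
  define la where "la = complex_of_real lam"
  define lp where "lp = complex_of_real (cpl lam)"
  define q where "q = gen_coin (coin_cos lam \<Phi> \<theta>) (coin_sin lam \<Phi> \<theta>) (cpl lam) \<psi>"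
  define X where "X k = cnj (fourier_window \<Phi> \<theta>' J (\<lambda>n. q n True) k)" for k
  define Y where "Y k = cnj (fourier_window \<Phi> \<theta>' J (\<lambda>n. q n False) k)" for k
  have XY: "2 * X k = la * (cnj T * a (k + 1) + T * a (k - 1)) - 2 * \<i> * lp * a k
      - \<i> * la * (cnj T * b (k + 1) - T * b (k - 1))"
    "2 * Y k = \<i> * la * (cnj T * a (k + 1) - T * a (k - 1))
      + la * (cnj T * b (k + 1) + T * b (k - 1)) + 2 * \<i> * lp * b k" for k
    unfolding X_def Y_def q_def a_def b_def T_def la_def lp_def by (fact cnj_fourier_window_gen_coin)+
  have Dq: "aubry_dual \<Phi> \<theta> \<theta>' J q k True = G k * (X k - \<i> * Y k)"
    "aubry_dual \<Phi> \<theta> \<theta>' J q k False = G k * (- \<i> * X k + Y k)" for k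
    by (simp_all add: aubry_dual_def G_def X_def Y_def)
  have D\<psi>: "aubry_dual \<Phi> \<theta> \<theta>' J \<psi> m True = G m * (a m - \<i> * b m)"
    "aubry_dual \<Phi> \<theta> \<theta>' J \<psi> m False = G m * (- \<i> * a m + b m)"
    by (simp_all add: aubry_dual_def G_def a_def b_def)
  have G_shift: "G (m - 1) = G m * T" "G (m + 1) = G m * cnj T"
    unfolding G_def T_def cis_cnj cis_mult by (rule arg_cong[where f = cis], simp add: algebra_simps)+
  have TT: "T * cnj T = 1" by (simp add: T_def cis_cnj cis_mult)
  have ll: "la * la + lp * lp = 1" unfolding la_def lp_def by (rule cpl_sq_complex[OF lam])
  have ii: "\<i> * \<i> = (-1 :: complex)" by simp
  have idx: "m - 1 + 1 = m" "m - 1 - 1 = m - 2" "m + 1 - 1 = m" "m + 1 + 1 = m + 2" by simp_all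
  have Sq: "gen_shift lam (- cpl lam) (-1) (aubry_dual \<Phi> \<theta> \<theta>' J q) m True
      = la * aubry_dual \<Phi> \<theta> \<theta>' J q (m - 1) True - lp * aubry_dual \<Phi> \<theta> \<theta>' J q m False"
    "gen_shift lam (- cpl lam) (-1) (aubry_dual \<Phi> \<theta> \<theta>' J q) m False
      = la * aubry_dual \<Phi> \<theta> \<theta>' J q (m + 1) False + lp * aubry_dual \<Phi> \<theta> \<theta>' J q m True"
    by (simp_all add: gen_shift_def la_def lp_def)
  have "gen_shift lam (- cpl lam) (-1) (aubry_dual \<Phi> \<theta> \<theta>' J q) m True = aubry_dual \<Phi> \<theta> \<theta>' J \<psi> m True"
    unfolding Sq D\<psi> Dq G_shift using XY[of "m - 1", unfolded idx] XY[of m] TT ll ii by algebra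
  moreover have "gen_shift lam (- cpl lam) (-1) (aubry_dual \<Phi> \<theta> \<theta>' J q) m False = aubry_dual \<Phi> \<theta> \<theta>' J \<psi> m False"
    unfolding Sq D\<psi> Dq G_shift using XY[of "m + 1", unfolded idx] XY[of m] TT ll ii by algebra
  ultimately show "gen_shift lam (- cpl lam) (-1) (aubry_dual \<Phi> \<theta> \<theta>' J q) m s = aubry_dual \<Phi> \<theta> \<theta>' J \<psi> m s"
    by (cases s) simp_all
qed

lemma UAMO_aubry_dual:
  assumes "lam1 \<in> {0..1}" "lam2 \<in> {0..1}" "supported_in K \<psi>" "K + 2 \<le> J"
  shows "UAMO lam2 lam1 \<Phi> \<theta>' (aubry_dual \<Phi> \<theta> \<theta>' J (UAMO lam1 lam2 \<Phi> \<theta> \<psi>))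
    = aubry_dual \<Phi> \<theta> \<theta>' J \<psi>"
proof -
  define g where "g = gen_coin (coin_cos lam2 \<Phi> \<theta>) (coin_sin lam2 \<Phi> \<theta>) (cpl lam2) \<psi>"
  have "g n s = 0" if "J - 1 < \<bar>n\<bar>" for n s
    using assms(3,4) that by (simp add: g_def gen_coin_def supported_in_def)
  then show ?thesis
    using coin_dual_shift[OF assms(1)] shift_dual_coin[OF assms(2)] by (simp add: UAMO_eq g_def)
qed

lemma aubry_dual_linear:
  "aubry_dual \<Phi> \<theta> \<theta>' J (\<lambda>n s. c * f n s + g n s) m s
     = cnj c * aubry_dual \<Phi> \<theta> \<theta>' J f m s + aubry_dual \<Phi> \<theta> \<theta>' J g m s"
  unfolding aubry_dual_def fourier_window_add fourier_window_mult by (simp add: algebra_simps)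

lemma site_norm2_aubry_dual:
  "site_norm2 (aubry_dual \<Phi> \<theta> \<theta>' J g) m
     = 2 * ((cmod (fourier_window \<Phi> \<theta>' J (\<lambda>n. g n True) m))\<^sup>2
            + (cmod (fourier_window \<Phi> \<theta>' J (\<lambda>n. g n False) m))\<^sup>2)"
proof -
  have "(cmod (cnj x - \<i> * cnj y))\<^sup>2 + (cmod (cnj y - \<i> * cnj x))\<^sup>2 = 2 * (cmod x)\<^sup>2 + 2 * (cmod y)\<^sup>2"
    for x y unfolding cmod_power2 by (simp add: power2_eq_square algebra_simps)
  then show ?thesis by (simp add: site_norm2_def aubry_dual_def norm_mult)
qed

definition window_l1_norm :: "int \<Rightarrow> state \<Rightarrow> real" where
  "window_l1_norm J g = (\<Sum>n\<in>{-J..J}. cmod (g n True) + cmod (g n False))"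

lemma site_norm2_aubry_dual_le:
  "site_norm2 (aubry_dual \<Phi> \<theta> \<theta>' J g) m \<le> 2 * (window_l1_norm J g)\<^sup>2"
proof -
  let ?a = "\<Sum>n\<in>{-J..J}. cmod (g n True)" and ?b = "\<Sum>n\<in>{-J..J}. cmod (g n False)"
  have "(cmod (fourier_window \<Phi> \<theta>' J (\<lambda>n. g n True) m))\<^sup>2
      + (cmod (fourier_window \<Phi> \<theta>' J (\<lambda>n. g n False) m))\<^sup>2 \<le> ?a\<^sup>2 + ?b\<^sup>2"
    by (intro add_mono power_mono norm_fourier_window_le) simp_all
  also have "?a\<^sup>2 + ?b\<^sup>2 \<le> (window_l1_norm J g)\<^sup>2"
    unfolding window_l1_norm_def sum.distrib power2_eq_square
    by (simp add: algebra_simps sum_nonneg mult_nonneg_nonneg)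
  finally show ?thesis unfolding site_norm2_aubry_dual by simp
qed

lemma sum_roots_of_unity:
  fixes d :: int and N :: nat
  assumes N: "0 < N" and d: "\<bar>d\<bar> < int N"
  shows "(\<Sum>j<N. cis (2 * pi * (of_int d * of_nat j / of_nat N))) = (if d = 0 then of_nat N else 0)"
proof (cases "d = 0")
  case False
  define w where "w = cis (2 * pi * of_int d / of_nat N)"
  have power: "cis (2 * pi * (of_int d * of_nat j / of_nat N)) = w ^ j" for j
  proof -
    have "w ^ j = cis (real j * (2 * pi * of_int d / of_nat N))" unfolding w_def by (rule Complex.DeMoivre)
    then show ?thesis by (simp add: field_simps)
  qed
  have "w ^ N = 1"
  proof -
    have "w ^ N = cis (real N * (2 * pi * of_int d / of_nat N))" unfolding w_def by (rule Complex.DeMoivre)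
    also have "\<dots> = cis (2 * pi * of_int d)" using N by simp
    finally show ?thesis by (simp add: cis_multiple_2pi)
  qed
  moreover have "w \<noteq> 1"
  proof
    assume "w = 1"
    then have "cos (2 * pi * of_int d / of_nat N) = 1" unfolding w_def by (metis cis.sel(1) one_complex.sel(1))
    then obtain k :: int where "2 * pi * of_int d / of_nat N = of_int k * 2 * pi" by (auto simp: cos_one_2pi_int)
    then have "real_of_int d = of_int k * of_nat N" using N by (simp add: field_simps)
    then have "d = k * int N" by (metis of_int_eq_iff of_int_mult of_int_of_nat_eq)
    then show False using d False N by (cases "k = 0") (auto simp: abs_mult)
  qed
  ultimately show ?thesis using False unfolding power by (simp add: sum_gp_strict)
qed simp

text \<open>Parseval's identity for the discrete Fourier transform on \<open>N\<close> equidistant phases, valid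
  because the window \<open>[-J, J]\<close> is shorter than \<open>N\<close>.\<close>
lemma parseval_grid:
  fixes b :: "int \<Rightarrow> complex" and N :: nat
  assumes N: "2 * J < int N" and J: "0 \<le> J"
  shows "(\<Sum>j<N. (cmod (\<Sum>n\<in>{-J..J}. cis (2 * pi * (of_int n * of_nat j / of_nat N)) * b n))\<^sup>2)
       = real N * (\<Sum>n\<in>{-J..J}. (cmod (b n))\<^sup>2)"
proof -
  have N0: "0 < N" using N J by linarith
  define c where "c j n = cis (2 * pi * (of_int n * of_nat j / of_nat N))" for j :: nat and n :: int
  have cc: "c j n * cnj (c j n') = cis (2 * pi * (of_int (n - n') * of_nat j / of_nat N))" for j n n'
    unfolding c_def cis_cnj cis_mult by (rule arg_cong[where f = cis]) (use N0 in \<open>simp add: field_simps\<close>)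
  have "complex_of_real (\<Sum>j<N. (cmod (\<Sum>n\<in>{-J..J}. c j n * b n))\<^sup>2)
      = (\<Sum>j<N. \<Sum>n\<in>{-J..J}. \<Sum>n'\<in>{-J..J}. b n * cnj (b n') * (c j n * cnj (c j n')))"
    unfolding of_real_sum complex_norm_square by (simp add: cnj_sum sum_product algebra_simps)
  also have "\<dots> = (\<Sum>n\<in>{-J..J}. \<Sum>n'\<in>{-J..J}. b n * cnj (b n') * (\<Sum>j<N. c j n * cnj (c j n')))"
    by (simp add: sum_distrib_left sum.swap[of _ "{..<N}"])
  also have "\<dots> = (\<Sum>n\<in>{-J..J}. \<Sum>n'\<in>{-J..J}. b n * cnj (b n') * (if n = n' then of_nat N else 0))"
  proof (intro sum.cong refl)
    fix n n' assume "n \<in> {-J..J}" "n' \<in> {-J..J}"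
    then have "\<bar>n - n'\<bar> < int N" using N by auto
    then show "b n * cnj (b n') * (\<Sum>j<N. c j n * cnj (c j n')) = b n * cnj (b n') * (if n = n' then of_nat N else 0)"
      unfolding cc using sum_roots_of_unity[OF N0, of "n - n'"] by simp
  qed
  also have "\<dots> = complex_of_real (real N * (\<Sum>n\<in>{-J..J}. (cmod (b n))\<^sup>2))"
    by (simp add: if_distrib[of "\<lambda>x. b _ * cnj (b _) * x"] sum.delta sum_distrib_left
        complex_norm_square[symmetric] mult.commute cong: if_cong)
  finally show ?thesis unfolding c_def of_real_eq_iff .
qed

lemma grid_average_aubry_dual:
  assumes "2 * J < int N" "0 \<le> J" "0 \<le> L"
  shows "(\<Sum>j<N. \<Sum>m\<in>{-L..L}. site_norm2 (aubry_dual \<Phi> \<theta> (of_nat j / of_nat N) J g) m)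
      = (2 * of_int L + 1) * (2 * real N * (\<Sum>n\<in>{-J..J}. site_norm2 g n))"
proof -
  have grid: "fourier_window \<Phi> (of_nat j / of_nat N) J f m
      = (\<Sum>n\<in>{-J..J}. cis (2 * pi * (of_int n * of_nat j / of_nat N)) * (cis (2 * pi * (of_int n * (of_int m * \<Phi>))) * f n))"
    for j m f
  proof -
    have "cis (2 * pi * (of_int n * (of_int m * \<Phi> + of_nat j / of_nat N)))
        = cis (2 * pi * (of_int n * of_nat j / of_nat N)) * cis (2 * pi * (of_int n * (of_int m * \<Phi>)))" for n
      unfolding cis_mult by (rule arg_cong[where f = cis]) (simp add: algebra_simps)
    then show ?thesis unfolding fourier_window_def by (simp add: mult.assoc)
  qed
  have fourier: "(\<Sum>j<N. (cmod (fourier_window \<Phi> (of_nat j / of_nat N) J f m))\<^sup>2)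
      = real N * (\<Sum>n\<in>{-J..J}. (cmod (f n))\<^sup>2)" for f m
    unfolding grid parseval_grid[OF assms(1,2)] by (simp add: norm_mult)
  have "(\<Sum>j<N. site_norm2 (aubry_dual \<Phi> \<theta> (of_nat j / of_nat N) J g) m)
      = 2 * real N * (\<Sum>n\<in>{-J..J}. site_norm2 g n)" for m
    unfolding site_norm2_aubry_dual sum_distrib_left[symmetric] sum.distrib fourier
    by (simp add: site_norm2_def sum.distrib algebra_simps)
  then have "(\<Sum>j<N. \<Sum>m\<in>{-L..L}. site_norm2 (aubry_dual \<Phi> \<theta> (of_nat j / of_nat N) J g) m)
      = (\<Sum>m\<in>{-L..L}. 2 * real N * (\<Sum>n\<in>{-J..J}. site_norm2 g n))"
    by (subst sum.swap) simp
  also have "\<dots> = (2 * of_int L + 1) * (2 * real N * (\<Sum>n\<in>{-J..J}. site_norm2 g n))"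
    using assms(3) by simp
  finally show ?thesis .
qed

lemma site_norm2_UAMO_le:
  assumes "lam1 \<in> {0..1}" "lam2 \<in> {0..1}" "\<And>n. site_norm2 g n \<le> B"
  shows "site_norm2 (UAMO lam1 lam2 \<Phi> \<theta> g) m \<le> 3 * B"
proof -
  let ?Q = "gen_coin (coin_cos lam2 \<Phi> \<theta>) (coin_sin lam2 \<Phi> \<theta>) (cpl lam2)"
  have "lam1\<^sup>2 + (- cpl lam1)\<^sup>2 = 1" using cpl_sq[OF assms(1)] by simp
  then have "site_norm2 (UAMO lam1 lam2 \<Phi> \<theta> g) m
      \<le> site_norm2 (?Q g) (m - 1) + site_norm2 (?Q g) m + site_norm2 (?Q g) (m + 1)"
    using site_norm2_gen_shift_le[of lam1 "- cpl lam1" "-1" "?Q g" m] by (simp add: UAMO_eq)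
  also have "\<dots> \<le> 3 * B"
    using assms(3)[of "m - 1"] assms(3)[of m] assms(3)[of "m + 1"]
    by (simp add: site_norm2_gen_coin coin_sq_sum[OF assms(2)])
  finally show ?thesis .
qed

lemma site_norm2_op_minus_le:
  assumes "cmod z = 1"
  shows "site_norm2 (\<lambda>n s. f n s - z * g n s) m \<le> 2 * (site_norm2 f m + site_norm2 g m)"
proof -
  have pt: "(cmod (x - z * y))\<^sup>2 \<le> 2 * ((cmod x)\<^sup>2 + (cmod y)\<^sup>2)" for x y
  proof -
    have "(cmod (x - z * y))\<^sup>2 \<le> (cmod x + cmod y)\<^sup>2"
      using norm_triangle_ineq4[of x "z * y"] assms by (simp add: norm_mult power_mono)
    also have "\<dots> \<le> 2 * ((cmod x)\<^sup>2 + (cmod y)\<^sup>2)"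
      using sum_squares_bound[of "cmod x" "cmod y"] by (simp add: power2_eq_square algebra_simps)
    finally show ?thesis .
  qed
  show ?thesis unfolding site_norm2_def
    using add_mono[OF pt[of "f m True" "g m True"] pt[of "f m False" "g m False"]] by simp
qed

text \<open>Truncating \<open>\<xi>\<close> to \<open>[-L, L]\<close> changes \<open>(T - z) \<xi>\<close> only at the four sites \<open>\<plusminus>L, \<plusminus>(L + 1)\<close>.\<close>
lemma truncation_defect:
  assumes T: "finite_range 1 T" and L: "1 \<le> L"
    and C: "\<And>m. site_norm2 (op_minus T z (truncate L \<xi>)) m \<le> C"
  shows "(\<Sum>m\<in>{-(L+1)..L+1}. site_norm2 (op_minus T z (truncate L \<xi>)) m)
    \<le> (\<Sum>m\<in>{-L..L}. site_norm2 (op_minus T z \<xi>) m) + 4 * C"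
proof -
  let ?f = "site_norm2 (op_minus T z (truncate L \<xi>))" and ?g = "site_norm2 (op_minus T z \<xi>)"
  let ?A = "{-(L+1)..L+1}" and ?I = "{-(L-1)..L-1}"
  have inner: "?f m = ?g m" if "m \<in> ?I" for m
  proof -
    have "T (truncate L \<xi>) m s = T \<xi> m s" for s
      by (rule finite_rangeD[OF T]) (use that in \<open>auto simp: truncate_def\<close>)
    moreover have "\<bar>m\<bar> \<le> L" using that by auto
    ultimately show ?thesis by (simp add: site_norm2_def truncate_def)
  qed
  have "?I \<subseteq> ?A" by auto
  then have "sum ?f ?A = sum ?f ?I + sum ?f (?A - ?I)"
    using sum.subset_diff[of ?I ?A ?f] by (simp add: add.commute)
  also have "sum ?f ?I \<le> sum ?g {-L..L}"
    using inner by (simp add: sum_mono2)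
  also have "sum ?f (?A - ?I) \<le> of_nat (card (?A - ?I)) * C"
    by (rule sum_bounded_above) (rule C)
  also have "card (?A - ?I) = 4"
    using L \<open>?I \<subseteq> ?A\<close> by (simp add: card_Diff_subset)
  finally show ?thesis by simp
qed

lemma UAMO_dual_residual:
  assumes "lam1 \<in> {0..1}" "lam2 \<in> {0..1}" "cmod z = 1" "supported_in K \<psi>" "K + 2 \<le> J"
  shows "op_minus (UAMO lam2 lam1 \<Phi> \<theta>') z (aubry_dual \<Phi> \<theta> \<theta>' J (UAMO lam1 lam2 \<Phi> \<theta> \<psi>))
    = (\<lambda>m s. - z * aubry_dual \<Phi> \<theta> \<theta>' J (op_minus (UAMO lam1 lam2 \<Phi> \<theta>) z \<psi>) m s)"
proof -
  let ?r = "op_minus (UAMO lam1 lam2 \<Phi> \<theta>) z \<psi>"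
  have eq: "UAMO lam1 lam2 \<Phi> \<theta> \<psi> = (\<lambda>n s. z * \<psi> n s + ?r n s)" by simp
  have "aubry_dual \<Phi> \<theta> \<theta>' J (UAMO lam1 lam2 \<Phi> \<theta> \<psi>) m s
      = cnj z * aubry_dual \<Phi> \<theta> \<theta>' J \<psi> m s + aubry_dual \<Phi> \<theta> \<theta>' J ?r m s" for m s
    by (subst (1) eq) (rule aubry_dual_linear)
  moreover have "z * cnj z = 1" using complex_norm_square[of z] assms(3) by simp
  ultimately show ?thesis
    using UAMO_aubry_dual[OF assms(1,2,4,5), of \<Phi> \<theta>'] by (simp add: fun_eq_iff algebra_simps)
qed

lemma window_sums_quasimode:
  assumes T: "window_isometric 1 T" and \<psi>: "supported_in K \<psi>" and J: "K + 1 \<le> J"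
    and bound: "l2norm (op_minus T z \<psi>) \<le> e * l2norm \<psi>" and "0 \<le> e"
  shows "(\<Sum>n\<in>{-J..J}. site_norm2 (T \<psi>) n) = (l2norm \<psi>)\<^sup>2"
    and "(\<Sum>n\<in>{-J..J}. site_norm2 (op_minus T z \<psi>) n) \<le> e\<^sup>2 * (l2norm \<psi>)\<^sup>2"
proof -
  have "l2norm \<psi> = window_norm J \<psi>"
    using supported_imp_l2(2)[OF \<psi>] window_norm_supported[OF \<psi>, of J] J by simp
  then show "(\<Sum>n\<in>{-J..J}. site_norm2 (T \<psi>) n) = (l2norm \<psi>)\<^sup>2"
    using window_isometricD(2)[OF T \<psi> J] window_norm_sq[of J "T \<psi>"] window_norm_sq[of J \<psi>] by simp
  have r: "supported_in (K + 1) (op_minus T z \<psi>)"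
    using window_isometricD(1)[OF T \<psi>] \<psi> by (auto simp: supported_in_def)
  have "window_norm J (op_minus T z \<psi>) \<le> e * l2norm \<psi>"
    using bound supported_imp_l2(2)[OF r] window_norm_supported[OF r, of J] J by simp
  then show "(\<Sum>n\<in>{-J..J}. site_norm2 (op_minus T z \<psi>) n) \<le> e\<^sup>2 * (l2norm \<psi>)\<^sup>2"
    unfolding window_norm_sq[symmetric] power_mult_distrib[symmetric] by (simp add: power_mono)
qed

lemma truncated_dual_error:
  fixes lam1 lam2 \<Phi> \<theta> \<theta>' :: real and z :: complex and K J L :: int and \<psi> :: state
  assumes lam: "lam1 \<in> {0..1}" "lam2 \<in> {0..1}" and z: "cmod z = 1"
    and \<psi>: "supported_in K \<psi>" and J: "K + 2 \<le> J" and L: "1 \<le> L"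
  defines "\<xi> \<equiv> aubry_dual \<Phi> \<theta> \<theta>' J (UAMO lam1 lam2 \<Phi> \<theta> \<psi>)"
  shows "(l2norm (op_minus (UAMO lam2 lam1 \<Phi> \<theta>') z (truncate L \<xi>)))\<^sup>2
    \<le> (\<Sum>m\<in>{-L..L}. site_norm2 (aubry_dual \<Phi> \<theta> \<theta>' J (op_minus (UAMO lam1 lam2 \<Phi> \<theta>) z \<psi>)) m)
      + 64 * (window_l1_norm J (UAMO lam1 lam2 \<Phi> \<theta> \<psi>))\<^sup>2"
proof -
  let ?W = "UAMO lam2 lam1 \<Phi> \<theta>'" and ?B = "2 * (window_l1_norm J (UAMO lam1 lam2 \<Phi> \<theta> \<psi>))\<^sup>2"
  have \<xi>L: "site_norm2 (truncate L \<xi>) m \<le> ?B" for m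
    using site_norm2_aubry_dual_le by (simp add: \<xi>_def truncate_def site_norm2_def)
  have "site_norm2 (op_minus ?W z (truncate L \<xi>)) m \<le> 2 * (3 * ?B + ?B)" for m
  proof -
    have "site_norm2 (op_minus ?W z (truncate L \<xi>)) m
        \<le> 2 * (site_norm2 (?W (truncate L \<xi>)) m + site_norm2 (truncate L \<xi>) m)"
      by (rule site_norm2_op_minus_le[OF z])
    also have "\<dots> \<le> 2 * (3 * ?B + ?B)"
      using site_norm2_UAMO_le[OF lam(2,1) \<xi>L, of \<Phi> \<theta>' m] \<xi>L[of m] by simp
    finally show ?thesis .
  qed
  then have "(\<Sum>m\<in>{-(L+1)..L+1}. site_norm2 (op_minus ?W z (truncate L \<xi>)) m)
      \<le> (\<Sum>m\<in>{-L..L}. site_norm2 (op_minus ?W z \<xi>) m) + 4 * (2 * (3 * ?B + ?B))"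
    by (intro truncation_defect[OF finite_range_UAMO L])
  moreover have "supported_in (L + 1) (op_minus ?W z (truncate L \<xi>))"
    using window_isometricD(1)[OF window_isometric_UAMO[OF lam(2,1)] supported_truncate]
      supported_truncate[of L \<xi>] by (auto simp: supported_in_def)
  moreover have "site_norm2 (op_minus ?W z \<xi>) m
      = site_norm2 (aubry_dual \<Phi> \<theta> \<theta>' J (op_minus (UAMO lam1 lam2 \<Phi> \<theta>) z \<psi>)) m" for m
    unfolding \<xi>_def UAMO_dual_residual[OF lam z \<psi> J] using z by (simp add: site_norm2_def norm_mult)
  ultimately show ?thesis
    using supported_imp_l2(2) window_norm_sq by (simp add: power_mult_distrib)
qed

text \<open>Averaging over the \<open>N\<close> equidistant dual phases \<open>\<theta>' = j / N\<close>: by Parseval the squared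
  residuals of the truncated dual states sum to at most \<open>e\<^sup>2\<close> times their squared norms, up to
  the boundary defects, which are negligible once the truncation window \<open>L\<close> is large.\<close>
lemma quasimode_transfer:
  assumes lam: "lam1 \<in> {0..1}" "lam2 \<in> {0..1}" and z: "cmod z = 1" and "0 < e"
    and qm: "quasimode (UAMO lam1 lam2 \<Phi> \<theta>) z e \<psi>"
  shows "\<exists>\<theta>'\<in>{0..1}. \<exists>\<xi>. quasimode (UAMO lam2 lam1 \<Phi> \<theta>') z (2 * e) \<xi>"
proof -
  obtain K0 where "supported_in K0 \<psi>" using qm unfolding quasimode_def by blast
  define K where "K = max K0 0"
  have K: "supported_in K \<psi>" "0 \<le> K"
    using supported_in_mono[OF \<open>supported_in K0 \<psi>\<close>] by (simp_all add: K_def)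
  define J where "J = K + 2"
  define N where "N = nat (2 * J + 1)"
  define P where "P = l2norm \<psi>"
  define \<phi> where "\<phi> = UAMO lam1 lam2 \<Phi> \<theta> \<psi>"
  define r where "r = op_minus (UAMO lam1 lam2 \<Phi> \<theta>) z \<psi>"
  define C where "C = 64 * (window_l1_norm J \<phi>)\<^sup>2"
  define L where "L = \<lceil>C / (e\<^sup>2 * P\<^sup>2)\<rceil> + 1"
  define \<xi> where "\<xi> j = truncate L (aubry_dual \<Phi> \<theta> (of_nat j / of_nat N) J \<phi>)" for j
  define X where "X j = (\<Sum>m\<in>{-L..L}. site_norm2 (aubry_dual \<Phi> \<theta> (of_nat j / of_nat N) J r) m)" for j
  define Y where "Y j = (\<Sum>m\<in>{-L..L}. site_norm2 (aubry_dual \<Phi> \<theta> (of_nat j / of_nat N) J \<phi>) m)" for j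
  have N: "2 * J < int N" "0 < N" and J: "0 \<le> J" "K + 1 \<le> J" using K by (auto simp: N_def J_def)
  have eP: "0 < e\<^sup>2 * P\<^sup>2" using quasimode_l2norm_pos[OF qm] \<open>0 < e\<close> by (simp add: P_def)
  have "0 \<le> C / (e\<^sup>2 * P\<^sup>2)" using eP by (simp add: C_def)
  then have L: "1 \<le> L" by (simp add: L_def)
  have "C / (e\<^sup>2 * P\<^sup>2) \<le> of_int (L - 1)" by (simp add: L_def)
  then have "C \<le> (L - 1) * (e\<^sup>2 * P\<^sup>2)" using eP by (simp add: pos_divide_le_eq)
  moreover have "0 \<le> of_int L * (e\<^sup>2 * P\<^sup>2)" using L eP by simp
  ultimately have C_small: "C < 6 * (2 * L + 1) * (e\<^sup>2 * P\<^sup>2)" using eP by (simp add: algebra_simps)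
  note sums = window_sums_quasimode[OF window_isometric_UAMO[OF lam] K(1) J(2), where z = z and e = e]
  have "(\<Sum>j<N. X j + C - 4 * e\<^sup>2 * Y j)
      = (\<Sum>j<N. X j) + real N * C - 4 * e\<^sup>2 * (\<Sum>j<N. Y j)"
    by (simp add: sum.distrib sum_subtractf sum_distrib_left)
  also have "\<dots> \<le> (2 * L + 1) * (2 * real N * (e\<^sup>2 * P\<^sup>2)) + real N * C - 4 * e\<^sup>2 * ((2 * L + 1) * (2 * real N * P\<^sup>2))"
    using grid_average_aubry_dual[OF N(1) J(1), of L \<Phi> \<theta>] L sums qm \<open>0 < e\<close>
    by (simp add: X_def Y_def r_def \<phi>_def P_def quasimode_def mult_left_mono)
  also have "\<dots> = real N * (C - 6 * (2 * L + 1) * (e\<^sup>2 * P\<^sup>2))" by (simp add: algebra_simps)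
  also have "\<dots> < 0" using N(2) C_small by (simp add: mult_pos_neg)
  finally obtain j where j: "j < N" "X j + C < 4 * e\<^sup>2 * Y j"
    by (metis (no_types, lifting) diff_ge_0_iff_ge lessThan_iff not_le sum_nonneg)
  let ?W' = "UAMO lam2 lam1 \<Phi> (of_nat j / of_nat N)"
  have "(l2norm (op_minus ?W' z (\<xi> j)))\<^sup>2 \<le> X j + C"
    using truncated_dual_error[OF lam z K(1) _ L] by (simp add: X_def C_def \<xi>_def \<phi>_def r_def J_def)
  moreover have "(l2norm (\<xi> j))\<^sup>2 = Y j"
    using supported_imp_l2(2)[OF supported_truncate] window_norm_truncate window_norm_sq
    by (simp add: \<xi>_def Y_def)
  ultimately have "(l2norm (op_minus ?W' z (\<xi> j)))\<^sup>2 < (2 * e * l2norm (\<xi> j))\<^sup>2"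
    using j(2) by (simp add: power_mult_distrib)
  then have residual: "l2norm (op_minus ?W' z (\<xi> j)) < 2 * e * l2norm (\<xi> j)"
    by (rule power_less_imp_less_base) (use \<open>0 < e\<close> in simp)
  have nonzero: "\<xi> j \<noteq> (\<lambda>n s. 0)"
  proof
    assume "\<xi> j = (\<lambda>n s. 0)"
    then have "l2norm (\<xi> j) = 0" by (simp add: l2norm_zero)
    with residual show False by (metis l2norm_nonneg mult_zero_right not_less)
  qed
  have "quasimode ?W' z (2 * e) (\<xi> j)"
    unfolding quasimode_def using residual nonzero supported_truncate[of L] by (auto simp: \<xi>_def)
  moreover have "of_nat j / of_nat N \<in> {0..1::real}" using j(1) by simp
  ultimately show ?thesis by blast
qed

lemma cos_sin_dist_sq: "(cos x - cos y)\<^sup>2 + (sin x - sin y)\<^sup>2 \<le> (x - y)\<^sup>2" for x y :: real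
proof -
  have "(cos x - cos y)\<^sup>2 + (sin x - sin y)\<^sup>2 = 2 - 2 * cos (x - y)"
    using sin_cos_squared_add[of x] sin_cos_squared_add[of y]
    by (simp add: cos_diff power2_eq_square algebra_simps)
  also have "\<dots> = 4 * (sin ((x - y) / 2))\<^sup>2"
    using cos_double_sin[of "(x - y) / 2"] by (simp only: mult_2 field_sum_of_halves)
  also have "\<dots> \<le> 4 * ((x - y) / 2)\<^sup>2"
    using power_mono[OF abs_sin_x_le_abs_x abs_ge_zero, of "(x - y) / 2" 2] by (simp add: power_divide)
  finally show ?thesis by (simp add: power_divide)
qed

lemma l2norm_UAMO_phase_diff:
  assumes lam: "lam1 \<in> {0..1}" "lam2 \<in> {0..1}" and \<xi>: "supported_in L \<xi>"
  shows "l2norm (\<lambda>n s. UAMO lam1 lam2 \<Phi> a \<xi> n s - UAMO lam1 lam2 \<Phi> b \<xi> n s) \<le> 2 * pi * \<bar>a - b\<bar> * l2norm \<xi>"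
proof -
  let ?S = "gen_shift lam1 (- cpl lam1) (-1)" and ?d = "2 * pi * \<bar>a - b\<bar>"
  define u where "u = gen_coin (\<lambda>n. coin_cos lam2 \<Phi> a n - coin_cos lam2 \<Phi> b n)
    (\<lambda>n. coin_sin lam2 \<Phi> a n - coin_sin lam2 \<Phi> b n) 0 \<xi>"
  have diff: "(\<lambda>n s. UAMO lam1 lam2 \<Phi> a \<xi> n s - UAMO lam1 lam2 \<Phi> b \<xi> n s) = ?S u"
    by (simp add: UAMO_eq u_def gen_shift_def gen_coin_def fun_eq_iff algebra_simps)
  have u: "supported_in L u" using \<xi> by (simp add: u_def supported_in_def gen_coin_def)
  have "site_norm2 u n \<le> ?d\<^sup>2 * site_norm2 \<xi> n" for n
  proof -
    define x where "x = 2 * pi * (of_int n * \<Phi> + a)"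
    define y where "y = 2 * pi * (of_int n * \<Phi> + b)"
    have coin: "coin_cos lam2 \<Phi> a n = lam2 * cos x" "coin_cos lam2 \<Phi> b n = lam2 * cos y"
      "coin_sin lam2 \<Phi> a n = lam2 * sin x" "coin_sin lam2 \<Phi> b n = lam2 * sin y"
      by (simp_all add: coin_cos_def coin_sin_def x_def y_def)
    have "(coin_cos lam2 \<Phi> a n - coin_cos lam2 \<Phi> b n)\<^sup>2 + (coin_sin lam2 \<Phi> a n - coin_sin lam2 \<Phi> b n)\<^sup>2
        = lam2\<^sup>2 * ((cos x - cos y)\<^sup>2 + (sin x - sin y)\<^sup>2)"
      unfolding coin by algebra
    also have "\<dots> \<le> 1 * (x - y)\<^sup>2"
      using lam(2) cos_sin_dist_sq[of x y] by (intro mult_mono) (auto simp: power_le_one)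
    also have "\<dots> = ?d\<^sup>2" by (simp add: x_def y_def power2_eq_square algebra_simps)
    finally show ?thesis
      unfolding u_def site_norm2_gen_coin by (intro mult_right_mono) simp_all
  qed
  then have "(window_norm (L + 1) u)\<^sup>2 \<le> (?d * window_norm (L + 1) \<xi>)\<^sup>2"
    unfolding window_norm_sq power_mult_distrib sum_distrib_left by (rule sum_mono)
  then have "window_norm (L + 1) u \<le> ?d * window_norm (L + 1) \<xi>"
    by (rule power2_le_imp_le) simp
  moreover have "l2norm (?S u) = window_norm (L + 1) u"
    using window_isometricD[OF window_isometric_gen_shift u, of lam1 "- cpl lam1" "-1"] cpl_sq[OF lam(1)]
      supported_imp_l2(2) by simp
  moreover have "window_norm (L + 1) \<xi> = l2norm \<xi>"
    using supported_imp_l2(2)[OF \<xi>] window_norm_supported[OF \<xi>, of "L + 1"] by simp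
  ultimately show ?thesis unfolding diff by simp
qed

lemma quasimode_phase_perturb:
  assumes lam: "lam1 \<in> {0..1}" "lam2 \<in> {0..1}" and qm: "quasimode (UAMO lam1 lam2 \<Phi> t) z e \<xi>"
  shows "quasimode (UAMO lam1 lam2 \<Phi> t') z (e + 2 * pi * \<bar>t' - t\<bar>) \<xi>"
proof -
  obtain L where \<xi>: "supported_in L \<xi>" using qm by (auto simp: quasimode_def)
  note l2 = supported_imp_l2(1)
  have W: "UAMO lam1 lam2 \<Phi> t \<xi> \<in> l2" "UAMO lam1 lam2 \<Phi> t' \<xi> \<in> l2"
    using l2[OF window_isometricD(1)[OF window_isometric_UAMO[OF lam] \<xi>]] by blast+
  have "op_minus (UAMO lam1 lam2 \<Phi> t') z \<xi>
      = (\<lambda>n s. op_minus (UAMO lam1 lam2 \<Phi> t) z \<xi> n s + (UAMO lam1 lam2 \<Phi> t' \<xi> n s - UAMO lam1 lam2 \<Phi> t \<xi> n s))"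
    by simp
  then have "l2norm (op_minus (UAMO lam1 lam2 \<Phi> t') z \<xi>)
      \<le> l2norm (op_minus (UAMO lam1 lam2 \<Phi> t) z \<xi>)
        + l2norm (\<lambda>n s. UAMO lam1 lam2 \<Phi> t' \<xi> n s - UAMO lam1 lam2 \<Phi> t \<xi> n s)"
    using l2_add(2)[OF l2_op_minus[where T = "UAMO lam1 lam2 \<Phi> t" and z = z, OF l2[OF \<xi>] W(1)]
        l2_diff(1)[OF W(2,1)]] by simp
  also have "\<dots> \<le> e * l2norm \<xi> + 2 * pi * \<bar>t' - t\<bar> * l2norm \<xi>"
    using qm l2norm_UAMO_phase_diff[OF lam \<xi>] by (intro add_mono) (simp_all add: quasimode_def)
  finally show ?thesis using qm by (simp add: quasimode_def algebra_simps)
qed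

lemma quasimode_mono: "quasimode T z e \<psi> \<Longrightarrow> e \<le> e' \<Longrightarrow> quasimode T z e' \<psi>"
  unfolding quasimode_def by (meson l2norm_nonneg mult_right_mono order_trans)

lemma approx_eigenvalue_from_quasimodes:
  assumes lam: "lam1 \<in> {0..1}" "lam2 \<in> {0..1}"
    and qm: "\<And>e. 0 < e \<Longrightarrow> \<exists>\<theta>\<in>{0..1}. \<exists>\<xi>. quasimode (UAMO lam1 lam2 \<Phi> \<theta>) z e \<xi>"
  shows "\<exists>\<theta>. approx_eigenvalue (UAMO lam1 lam2 \<Phi> \<theta>) z"
proof -
  have "\<exists>\<theta>\<in>{0..1}. \<exists>\<xi>. quasimode (UAMO lam1 lam2 \<Phi> \<theta>) z (1 / (real k + 1)) \<xi>" for k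
    by (rule qm) simp
  then obtain th \<xi> where th: "\<And>k. th k \<in> {0..1}"
    and \<xi>: "\<And>k. quasimode (UAMO lam1 lam2 \<Phi> (th k)) z (1 / (real k + 1)) (\<xi> k)"
    by metis
  obtain l r where l: "strict_mono r" "(th \<circ> r) \<longlonglongrightarrow> l"
    using compact_Icc[of 0 1, THEN compact_imp_seq_compact] th by (metis seq_compactE)
  have "\<exists>\<xi>. quasimode (UAMO lam1 lam2 \<Phi> l) z e \<xi>" if "0 < e" for e
  proof -
    have "0 < e / (4 * pi)" using \<open>0 < e\<close> by simp
    then obtain k0 where k0: "\<And>k. k0 \<le> k \<Longrightarrow> \<bar>th (r k) - l\<bar> < e / (4 * pi)"
      using l(2) unfolding LIMSEQ_iff by fastforce
    define k where "k = max k0 (nat \<lceil>2 / e\<rceil>)"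
    have "2 / e \<le> real k" unfolding k_def by linarith
    also have "\<dots> \<le> real (r k)" using seq_suble[OF l(1)] by simp
    finally have "1 / (real (r k) + 1) \<le> e / 2" using \<open>0 < e\<close> by (simp add: field_simps)
    moreover have "2 * pi * \<bar>l - th (r k)\<bar> \<le> e / 2"
      using k0[of k] by (simp add: k_def abs_minus_commute field_simps)
    ultimately have "1 / (real (r k) + 1) + 2 * pi * \<bar>l - th (r k)\<bar> \<le> e" by linarith
    then show ?thesis
      using quasimode_mono[OF quasimode_phase_perturb[OF lam \<xi>[of "r k"], of l]] by blast
  qed
  then show ?thesis unfolding approx_eigenvalue_def by blast
qed

lemma Sigma_UAMO_subset:
  assumes lam: "lam1 \<in> {0..1}" "lam2 \<in> {0..1}"
  shows "Sigma_UAMO lam1 lam2 \<Phi> \<subseteq> Sigma_UAMO lam2 lam1 \<Phi>"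
proof
  fix z assume "z \<in> Sigma_UAMO lam1 lam2 \<Phi>"
  then obtain \<theta> where z: "z \<in> op_spectrum (UAMO lam1 lam2 \<Phi> \<theta>)" unfolding Sigma_UAMO_def by blast
  interpret W: l2_unitary "UAMO lam1 lam2 \<Phi> \<theta>" by (rule l2_unitary_UAMO[OF lam])
  have "\<exists>\<theta>'\<in>{0..1}. \<exists>\<xi>. quasimode (UAMO lam2 lam1 \<Phi> \<theta>') z e \<xi>" if "0 < e" for e
  proof -
    obtain \<psi> where "quasimode (UAMO lam1 lam2 \<Phi> \<theta>) z (e / 2) \<psi>"
      using z W.spectrum_iff_approx_eigenvalue \<open>0 < e\<close> unfolding approx_eigenvalue_def by fastforce
    from quasimode_transfer[OF lam W.spectrum_on_circle[OF z] _ this] \<open>0 < e\<close> show ?thesis by simp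
  qed
  then obtain \<theta>' where "approx_eigenvalue (UAMO lam2 lam1 \<Phi> \<theta>') z"
    using approx_eigenvalue_from_quasimodes[OF lam(2,1)] by blast
  then have "z \<in> op_spectrum (UAMO lam2 lam1 \<Phi> \<theta>')"
    using l2_unitary.spectrum_iff_approx_eigenvalue[OF l2_unitary_UAMO[OF lam(2,1)]] by blast
  then show "z \<in> Sigma_UAMO lam2 lam1 \<Phi>" unfolding Sigma_UAMO_def by blast
qed

theorem corollary2p4:
  fixes lam1 lam2 \<Phi> :: real
  assumes "lam1 \<in> {0..1}" and "lam2 \<in> {0..1}" and "\<Phi> \<notin> \<rat>"
  shows "Sigma_UAMO lam1 lam2 \<Phi> = Sigma_UAMO lam2 lam1 \<Phi>"
  using Sigma_UAMO_subset[OF assms(1,2)] Sigma_UAMO_subset[OF assms(2,1)] by (rule equalityI)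

end
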